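(* Let $g\in A[z;\sigma]$ be delay-free and semi-reduced, and let $\langle g\rangle:=\{fg\mid f\in A[z;\sigma]\}$ be the left ideal generated by $g$. Then the following are equivalent: (i) $\langle g\rangle$ is a direct summand of the left $\mathbb{F}[z]$-module $A[z;\sigma]$ (i.e. $\mathfrak{p}^{-1}(\langle g\rangle)$ is a $\sigma$-cyclic convolutional code); (ii) $\langle g\rangle$ is a direct summand of the ring $A[z;\sigma]$, i.e. there is a left ideal $J$ with $A[z;\sigma]=\langle g\rangle\oplus J$; (iii) $\xi(g)\in\mathcal{M}_{\mathrm{basic}}$.
   Context: Let $\mathbb{F}$ be a finite field with $q$ elements and $n\ge2$ a divisor of $q-1$. Let $A=\mathbb{F}\times\cdots\times\mathbb{F}$ ($n$ copies), elements written $[a_1,\dots,a_n]$, with $\mathbb{F}$ embedded diagonally; $e_i$ is the element with $1$ in position $i$ and $0$ elsewhere. Let $\sigma([a_1,\dots,a_n])=[a_n,a_1,\dots,a_{n-1}]$. $A[z;\sigma]$ is the skew polynomial ring of polynomials $\sum_\nu z^\nu a_\nu$ ($a_\nu\in A$, right coefficients) with multiplication determined by $az=z\sigma(a)$; it contains $\mathbb{F}[z]$ as a subring (since $\sigma$ fixes $\mathbb{F}$) and is a left $\mathbb{F}[z]$-module by left multiplication. Degree of $\sum z^\nu a_\nu$: largest $\nu$ with $a_\nu\ne0$. For $g\in A[z;\sigma]$: the components are $g^{(a)}=e_ag$, the support is $T_g=\{a\mid g^{(a)}\ne0\}$; $g$ is delay-free if $T_g=T_{g_0}$ where $g_0\in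 A$ is the constant term of $g$; each component has the form $\sum_j z^jc_{a,j}e_{(a+j-1\bmod n)+1}$ with $c_{a,j}\in\mathbb{F}$, and $g$ is semi-reduced if the leading coefficients of the components $g^{(a)}$, $a\in T_g$, lie in pairwise different ideals $\langle e_i\rangle$. Fix an $\mathbb{F}$-algebra isomorphism $\phi:\mathbb{F}[x]/\langle x^n-1\rangle\to A$ (it exists by the Chinese Remainder Theorem). Define $\mathfrak{p}:\mathbb{F}[z]^n\to A[z;\sigma]$ by $\sum_\nu z^\nu v_\nu\mapsto\sum_\nu z^\nu\phi(\sum_{i=0}^{n-1}v_{\nu,i}x^i)$ for $v_\nu=(v_{\nu,0},\dots,v_{\nu,n-1})\in\mathbb{F}^n$; it is an isomorphism of left $\mathbb{F}[z]$-modules. A $\sigma$-cyclic convolutional code is a submodule $\mathcal{C}\subseteq\mathbb{F}[z]^n$ that is a direct summand of $\mathbb{F}[z]^n$ and such that $\mathfrak{p}(\mathcal{C})$ is a left ideal of $A[z;\sigma]$. Let $\mathcal{M}=\{(m_{ab})\in\mathbb{F}[t]^{n\times n}\mid m_{ab}(0)=0\text{ for }1\le b<a\le n\}$. Writing $g=\sum_{l=0}^Nz^{nl}\sum_{i=0}^{n-1}z^i[c^l_{i1},\dots,c^l_{in}]$ uniquely, $\xi(g)$ is the matrix $(m_{ab})$ with $m_{ab}=\sum_lt^lc^l_{b-a,b}$ if $b\ge a$ and $m_{ab}=\sum_lt^{l+1}c^l_{n+b-a,b}$ if $b<a$; $\xi:A[z;\sigma]\to\mathcal{M}$ is a ring isomorphism.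 For $M\in\mathcal{M}$: $M$ is delay-free if $m_{aa}(0)\ne0$ for every index $a$ of a nonzero row of $M$. A matrix in $\mathbb{F}[t]^{k\times n}$ is basic if its $k\times k$ minors are coprime (equivalently it has rank $k$ at every point of an algebraic closure of $\mathbb{F}$). $\mathcal{M}_{\mathrm{basic}}$ is the set of $M\in\mathcal{M}$ that are delay-free and whose nonzero rows form a basic matrix. *)

theory Defs
  imports "HOL-Computational_Algebra.Polynomial" "Jordan_Normal_Form.Determinant"
          "Jordan_Normal_Form.DL_Submatrix"
begin

(* Elements of A[z;sigma] (A = F^n) are encoded by their n position-polynomials:
   g = sum_nu z^nu a_nu  is represented by  (\<lambda>i. sum_nu a_nu(i) z^nu),  i < n
   (0-indexed positions; positions i >= n carry 0). *)

definition skp :: "nat \<Rightarrow> (nat \<Rightarrow> 'a::field poly) set" where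
  "skp n = {g. \<forall>i\<ge>n. g i = 0}"

definition skzero :: "nat \<Rightarrow> 'a::field poly" where
  "skzero = (\<lambda>i. 0)"

definition skadd :: "(nat \<Rightarrow> 'a::field poly) \<Rightarrow> (nat \<Rightarrow> 'a poly) \<Rightarrow> nat \<Rightarrow> 'a poly" where
  "skadd f g = (\<lambda>i. f i + g i)"

(* sigma^lambda shifts positions: sigma^lambda(a)_i = a_{(i - lambda) mod n} *)
definition shiftpos :: "nat \<Rightarrow> nat \<Rightarrow> nat \<Rightarrow> nat" where
  "shiftpos n l i = (i + (n - l mod n)) mod n"

(* skew multiplication: (sum z^mu a_mu)(sum z^l b_l) = sum z^(mu+l) sigma^l(a_mu) b_l *)
definition skmult :: "nat \<Rightarrow> (nat \<Rightarrow> 'a::field poly) \<Rightarrow> (nat \<Rightarrow> 'a poly) \<Rightarrow> nat \<Rightarrow> 'a poly" where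
  "skmult n f g = (\<lambda>i. if i < n then
      (\<Sum>l\<le>degree (g i). monom (coeff (g i) l) l * f (shiftpos n l i)) else 0)"

(* left multiplication by p \<in> F[z] (F[z] embedded diagonally) *)
definition sksmult :: "'a::field poly \<Rightarrow> (nat \<Rightarrow> 'a poly) \<Rightarrow> nat \<Rightarrow> 'a poly" where
  "sksmult p g = (\<lambda>i. p * g i)"

definition left_ideal_gen :: "nat \<Rightarrow> (nat \<Rightarrow> 'a::field poly) \<Rightarrow> (nat \<Rightarrow> 'a poly) set" where
  "left_ideal_gen n g = {skmult n f g | f. f \<in> skp n}"

definition is_left_ideal :: "nat \<Rightarrow> (nat \<Rightarrow> 'a::field poly) set \<Rightarrow> bool" where
  "is_left_ideal n J \<longleftrightarrow> J \<subseteq> skp n \<and> skzero \<in> J \<and>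
     (\<forall>x\<in>J. \<forall>y\<in>J. skadd x y \<in> J) \<and> (\<forall>f\<in>skp n. \<forall>x\<in>J. skmult n f x \<in> J)"

definition is_Fz_submodule :: "nat \<Rightarrow> (nat \<Rightarrow> 'a::field poly) set \<Rightarrow> bool" where
  "is_Fz_submodule n N \<longleftrightarrow> N \<subseteq> skp n \<and> skzero \<in> N \<and>
     (\<forall>x\<in>N. \<forall>y\<in>N. skadd x y \<in> N) \<and> (\<forall>p. \<forall>x\<in>N. sksmult p x \<in> N)"

definition internal_direct_sum :: "nat \<Rightarrow> (nat \<Rightarrow> 'a::field poly) set \<Rightarrow> (nat \<Rightarrow> 'a poly) set \<Rightarrow> bool" where
  "internal_direct_sum n I J \<longleftrightarrow> I \<inter> J = {skzero} \<and> {skadd x y | x y. x \<in> I \<and> y \<in> J} = skp n"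

definition direct_summand_Fz :: "nat \<Rightarrow> (nat \<Rightarrow> 'a::field poly) set \<Rightarrow> bool" where
  "direct_summand_Fz n I \<longleftrightarrow> (\<exists>N. is_Fz_submodule n N \<and> internal_direct_sum n I N)"

definition direct_summand_ring :: "nat \<Rightarrow> (nat \<Rightarrow> 'a::field poly) set \<Rightarrow> bool" where
  "direct_summand_ring n I \<longleftrightarrow> (\<exists>J. is_left_ideal n J \<and> internal_direct_sum n I J)"

definition unit_e :: "nat \<Rightarrow> nat \<Rightarrow> 'a::field poly" where
  "unit_e a = (\<lambda>i. if i = a then 1 else 0)"

definition comp :: "nat \<Rightarrow> (nat \<Rightarrow> 'a::field poly) \<Rightarrow> nat \<Rightarrow> nat \<Rightarrow> 'a poly" where
  "comp n g a = skmult n (unit_e a) g"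

definition supp :: "nat \<Rightarrow> (nat \<Rightarrow> 'a::field poly) \<Rightarrow> nat set" where
  "supp n g = {a. a < n \<and> comp n g a \<noteq> skzero}"

definition const_term :: "nat \<Rightarrow> (nat \<Rightarrow> 'a::field poly) \<Rightarrow> nat \<Rightarrow> 'a poly" where
  "const_term n g = (\<lambda>i. if i < n then [:coeff (g i) 0:] else 0)"

definition delay_free :: "nat \<Rightarrow> (nat \<Rightarrow> 'a::field poly) \<Rightarrow> bool" where
  "delay_free n g \<longleftrightarrow> supp n g = supp n (const_term n g)"

definition skdeg :: "nat \<Rightarrow> (nat \<Rightarrow> 'a::field poly) \<Rightarrow> nat" where
  "skdeg n g = Max (insert 0 (degree ` g ` {..<n}))"

definition sklc :: "nat \<Rightarrow> (nat \<Rightarrow> 'a::field poly) \<Rightarrow> nat \<Rightarrow> 'a" where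
  "sklc n g = (\<lambda>i. if i < n then coeff (g i) (skdeg n g) else 0)"

definition in_ideal_e :: "nat \<Rightarrow> (nat \<Rightarrow> 'a::field) \<Rightarrow> nat \<Rightarrow> bool" where
  "in_ideal_e n v i \<longleftrightarrow> (\<forall>j<n. j \<noteq> i \<longrightarrow> v j = 0)"

definition semi_reduced :: "nat \<Rightarrow> (nat \<Rightarrow> 'a::field poly) \<Rightarrow> bool" where
  "semi_reduced n g \<longleftrightarrow> (\<forall>a\<in>supp n g. \<forall>b\<in>supp n g. a \<noteq> b \<longrightarrow>
     \<not> (\<exists>i<n. in_ideal_e n (sklc n (comp n g a)) i \<and> in_ideal_e n (sklc n (comp n g b)) i))"

(* xi(g), 0-indexed: coefficient of z^(n l + i) at position b is c^l_{i,b} *)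
definition xi_entry :: "nat \<Rightarrow> (nat \<Rightarrow> 'a::field poly) \<Rightarrow> nat \<Rightarrow> nat \<Rightarrow> 'a poly" where
  "xi_entry n g a b = (if b \<ge> a
     then (\<Sum>l\<le>degree (g b). monom (coeff (g b) (n*l + (b - a))) l)
     else (\<Sum>l\<le>degree (g b). monom (coeff (g b) (n*l + (n + b - a))) (l+1)))"

definition xi :: "nat \<Rightarrow> (nat \<Rightarrow> 'a::field poly) \<Rightarrow> 'a poly mat" where
  "xi n g = mat n n (\<lambda>(a,b). xi_entry n g a b)"

definition in_M :: "nat \<Rightarrow> 'a::field poly mat \<Rightarrow> bool" where
  "in_M n M \<longleftrightarrow> M \<in> carrier_mat n n \<and>
     (\<forall>a<n. \<forall>b<n. b < a \<longrightarrow> poly (M $$ (a,b)) 0 = 0)"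

definition nonzero_rows :: "'a::field poly mat \<Rightarrow> nat set" where
  "nonzero_rows M = {a. a < dim_row M \<and> (\<exists>b<dim_col M. M $$ (a,b) \<noteq> 0)}"

definition delay_free_mat :: "'a::field poly mat \<Rightarrow> bool" where
  "delay_free_mat M \<longleftrightarrow> (\<forall>a\<in>nonzero_rows M. poly (M $$ (a,a)) 0 \<noteq> 0)"

definition basic :: "'a::field poly mat \<Rightarrow> bool" where
  "basic B \<longleftrightarrow> (\<forall>d. (\<forall>J. J \<subseteq> {..<dim_col B} \<and> card J = dim_row B \<longrightarrow>
                        d dvd det (submatrix B UNIV J)) \<longrightarrow> is_unit d)"

definition M_basic :: "nat \<Rightarrow> 'a::field poly mat \<Rightarrow> bool" where
  "M_basic n M \<longleftrightarrow> in_M n M \<and> delay_free_mat M \<and> basic (submatrix M (nonzero_rows M) UNIV)"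

end

theory Submission
  imports Defs
begin

text \<open>
  Writing \<open>f = \<Sum>\<^sub>i f\<^sub>i(z) e\<^sub>i\<close> with \<open>f\<^sub>i(z) \<in> \<bbbF>[z]\<close> shows that \<open>\<langle>g\<rangle>\<close> is the \<open>\<bbbF>[z]\<close>-span of the
  components \<open>g\<^bsup>(a)\<^esup>\<close>, \<open>a \<in> T\<^sub>g\<close>. For semi-reduced \<open>g\<close> their leading coefficients sit at distinct
  positions, so they are \<open>\<bbbF>[z]\<close>-independent, and \<open>\<langle>g\<rangle>\<close> is an \<open>\<bbbF>[z]\<close>-direct summand exactly when
  the matrix \<open>Q = (g\<^bsup>(a)\<^esup>\<^sub>b)\<close> of components has a polynomial right inverse. Conversely such a
  right inverse gives an \<open>\<bbbF>[z]\<close>-linear projection onto \<open>\<langle>g\<rangle>\<close>; assembled componentwise it commutes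
  with the idempotents \<open>e\<^sub>c\<close>, so its kernel is a complementary left ideal. This proves
  (i) \<open>\<Longleftrightarrow>\<close> (ii).

  A polynomial matrix has a right inverse iff its maximal minors are coprime. The entries of
  \<open>\<xi>(g)\<close> satisfy \<open>z\<^sup>a Q\<^sub>a\<^sub>b = \<xi>\<^sub>a\<^sub>b(z\<^sup>n) z\<^sup>b\<close>, so the maximal minors of \<open>Q\<close> and of the nonzero rows of
  \<open>\<xi>(g)\<close> agree up to powers of \<open>z\<close> and the substitution \<open>z \<mapsto> z\<^sup>n\<close>. Delay-freeness makes the
  principal minor on \<open>T\<^sub>g\<close> nonzero at \<open>0\<close>, which keeps all common divisors prime to \<open>z\<close>; hence
  coprimality transfers, proving (ii) \<open>\<Longleftrightarrow>\<close> (iii).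
\<close>

section \<open>Positions and components\<close>

lemma shiftpos_less: "0 < n \<Longrightarrow> shiftpos n l i < n"
  unfolding shiftpos_def by simp

lemma shiftpos_int:
  assumes "0 < n"
  shows "int (shiftpos n l j) = (int j - int l) mod int n"
proof -
  have "int (n - l mod n) = int n - int l mod int n"
    using assms by (simp add: zmod_int)
  then have "int (shiftpos n l j) = (int j + (int n - int l mod int n)) mod int n"
    unfolding shiftpos_def by (simp add: zmod_int)
  also have "\<dots> = (int j - int l) mod int n"
    by (metis add.commute diff_add_eq mod_add_self2 mod_diff_right_eq)
  finally show ?thesis .
qed

lemma shiftpos_eq_iff:
  assumes "a < n"
  shows "shiftpos n l j = a \<longleftrightarrow> (a + l) mod n = j mod n"
proof -
  have "shiftpos n l j = a \<longleftrightarrow> (int j - int l) mod int n = int a mod int n"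
    using assms shiftpos_int[of n l j] by (auto simp: zmod_int[symmetric])
  also have "\<dots> \<longleftrightarrow> int n dvd (int a + int l) - int j"
    by (simp add: mod_eq_dvd_iff dvd_diff_commute algebra_simps)
  also have "\<dots> \<longleftrightarrow> (int a + int l) mod int n = int j mod int n"
    by (simp add: mod_eq_dvd_iff)
  also have "\<dots> \<longleftrightarrow> int ((a + l) mod n) = int (j mod n)"
    by (simp add: zmod_int)
  finally show ?thesis by simp
qed

lemma shiftpos_Suc_eq_iff:
  assumes "a < n"
  shows "shiftpos n (Suc m) j = a \<longleftrightarrow> shiftpos n m j = Suc a mod n"
  using assms by (simp add: shiftpos_eq_iff mod_add_left_eq)

lemma shiftpos_inj:
  assumes "j < n" "j' < n" "shiftpos n l j = shiftpos n l j'"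
  shows "j = j'"
proof -
  have "shiftpos n l j < n" using assms(1) by (simp add: shiftpos_less)
  then have "j mod n = j' mod n"
    using shiftpos_eq_iff[of "shiftpos n l j" n l] assms(3) by metis
  then show ?thesis using assms(1,2) by simp
qed

lemma shiftpos_diff_eq_iff:
  assumes "a < n" "a \<le> m"
  shows "shiftpos n (m - a) b = a \<longleftrightarrow> m mod n = b mod n"
  using assms by (simp add: shiftpos_eq_iff)

lemma coeff_comp:
  "coeff (comp n x a j) l = (if j < n \<and> shiftpos n l j = a then coeff (x j) l else 0)"
proof (cases "j < n")
  case True
  have "coeff (comp n x a j) l
      = (\<Sum>m\<le>degree (x j). if m = l \<and> shiftpos n l j = a then coeff (x j) l else 0)"
    unfolding comp_def skmult_def using True
    by (simp add: coeff_sum) (rule sum.cong, auto simp: unit_e_def)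
  also have "\<dots> = (if shiftpos n l j = a then coeff (x j) l else 0)"
    by (cases "l \<le> degree (x j)") (auto simp: coeff_eq_0)
  finally show ?thesis using True by simp
qed (simp add: comp_def skmult_def)

lemma comp_skp: "comp n x a \<in> skp n"
  unfolding skp_def by (auto intro!: poly_eqI simp: coeff_comp)

lemma comp_eq_0_outside: "n \<le> j \<Longrightarrow> comp n x a j = 0"
  by (auto intro!: poly_eqI simp: coeff_comp)

lemma comp_eq_0_index_outside:
  assumes "0 < n" "n \<le> a"
  shows "comp n x a = (\<lambda>j. 0)"
proof -
  have "shiftpos n l j \<noteq> a" for l j
    using shiftpos_less[OF assms(1)] assms(2) by (metis leD)
  then show ?thesis by (intro ext poly_eqI) (simp add: coeff_comp)
qed

lemma comp_comp: "comp n (comp n x a) b = (if a = b then comp n x a else (\<lambda>j. 0))"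
  by (intro ext poly_eqI) (auto simp: coeff_comp)

lemma comp_add: "comp n (\<lambda>j. x j + y j) a j = comp n x a j + comp n y a j"
  by (rule poly_eqI) (auto simp: coeff_comp)

lemma comp_smult: "comp n (\<lambda>j. smult c (x j)) a j = smult c (comp n x a j)"
  by (rule poly_eqI) (auto simp: coeff_comp)

lemma comp_sum: "comp n (\<lambda>j. \<Sum>k\<in>K. x k j) a j = (\<Sum>k\<in>K. comp n (x k) a j)"
  by (rule poly_eqI) (auto simp: coeff_comp coeff_sum)

lemma comp_zero: "comp n (\<lambda>j. 0) a = (\<lambda>j. 0)"
  by (intro ext poly_eqI) (auto simp: coeff_comp)

lemma comp_pCons_0:
  assumes "a < n"
  shows "comp n (\<lambda>j. pCons 0 (x j)) a j = pCons 0 (comp n x (Suc a mod n) j)"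
  by (rule poly_eqI) (use assms shiftpos_Suc_eq_iff in \<open>auto simp: coeff_comp coeff_pCons split: nat.split\<close>)

lemma sum_comp:
  assumes "0 < n" "x \<in> skp n"
  shows "(\<Sum>a<n. comp n x a j) = x j"
proof (cases "j < n")
  case True
  have "coeff (\<Sum>a<n. comp n x a j) l = coeff (x j) l" for l
  proof -
    have "coeff (\<Sum>a<n. comp n x a j) l = (\<Sum>a<n. if a = shiftpos n l j then coeff (x j) l else 0)"
      unfolding coeff_sum by (rule sum.cong) (auto simp: coeff_comp True)
    then show ?thesis using shiftpos_less[OF assms(1)] by simp
  qed
  then show ?thesis by (rule poly_eqI)
qed (use assms in \<open>simp add: comp_eq_0_outside skp_def\<close>)

lemma skmult_eq_sum_comp:
  assumes "0 < n"
  shows "skmult n f x = (\<lambda>j. \<Sum>i<n. f i * comp n x i j)"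
proof
  fix j
  show "skmult n f x j = (\<Sum>i<n. f i * comp n x i j)"
  proof (cases "j < n")
    case True
    have "(\<Sum>i<n. f i * comp n x i j)
       = (\<Sum>m\<le>degree (x j). monom (coeff (x j) m) m * (\<Sum>i<n. f i * unit_e i (shiftpos n m j)))"
      unfolding comp_def skmult_def using True
      by (simp add: sum_distrib_left algebra_simps) (rule sum.swap)
    also have "\<dots> = (\<Sum>m\<le>degree (x j). monom (coeff (x j) m) m * f (shiftpos n m j))"
      using shiftpos_less[OF assms] by (simp add: unit_e_def if_distrib cong: if_cong)
    finally show ?thesis unfolding skmult_def using True by simp
  qed (simp add: skmult_def comp_def)
qed

lemma sum_rotate:
  assumes "0 < n"
  shows "(\<Sum>c<n. F (Suc c mod n)) = (\<Sum>c<n. F c)"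
proof -
  have inj: "inj_on (\<lambda>c. Suc c mod n) {..<n}"
    by (rule inj_onI) (auto, metis mod_Suc mod_if nat.distinct(1) nat.inject)
  moreover have "(\<lambda>c. Suc c mod n) ` {..<n} = {..<n}"
    by (rule endo_inj_surj) (use inj assms in auto)
  ultimately show ?thesis by (intro sum.reindex_bij_betw) (simp add: bij_betw_def)
qed

section \<open>The left ideal generated by a skew polynomial\<close>

lemma smult_sum_distrib: "smult c (\<Sum>k\<in>K. f k) = (\<Sum>k\<in>K. smult c (f k))"
  by (induction K rule: infinite_finite_induct) (auto simp: smult_add_right)

lemma pCons_0_sum:
  fixes f :: "'b \<Rightarrow> 'a::comm_semiring_1 poly"
  shows "pCons 0 (\<Sum>k\<in>K. f k) = (\<Sum>k\<in>K. pCons 0 (f k))"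
  using sum_distrib_left[of "[:0, 1:]" f K] by simp

definition lin_comb :: "nat \<Rightarrow> (nat \<Rightarrow> nat \<Rightarrow> 'a::field poly) \<Rightarrow> (nat \<Rightarrow> 'a poly) \<Rightarrow> nat \<Rightarrow> 'a poly" where
  "lin_comb n q f = (\<lambda>j. \<Sum>a<n. f a * q a j)"

lemma lin_comb_diff: "(\<lambda>j. lin_comb n q f j - lin_comb n q f' j) = lin_comb n q (\<lambda>a. f a - f' a)"
  unfolding lin_comb_def by (rule ext) (simp add: sum_subtractf left_diff_distrib)

lemma left_ideal_gen_eq_range_lin_comb:
  assumes "0 < n"
  shows "left_ideal_gen n g = range (lin_comb n (comp n g))"
proof
  show "left_ideal_gen n g \<subseteq> range (lin_comb n (comp n g))"
    unfolding left_ideal_gen_def lin_comb_def skmult_eq_sum_comp[OF assms] by auto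
  show "range (lin_comb n (comp n g)) \<subseteq> left_ideal_gen n g"
  proof
    fix x assume "x \<in> range (lin_comb n (comp n g))"
    then obtain f where x: "x = lin_comb n (comp n g) f" by auto
    let ?f = "\<lambda>i. if i < n then f i else 0"
    have "?f \<in> skp n" unfolding skp_def by auto
    moreover have "skmult n ?f g = x"
      unfolding x skmult_eq_sum_comp[OF assms] lin_comb_def by (intro ext sum.cong) auto
    ultimately show "x \<in> left_ideal_gen n g" unfolding left_ideal_gen_def by blast
  qed
qed

lemma left_ideal_imp_Fz_submodule:
  assumes "0 < n" "is_left_ideal n J"
  shows "is_Fz_submodule n J"
  unfolding is_Fz_submodule_def
proof (intro conjI allI ballI)
  show "J \<subseteq> skp n" "skzero \<in> J" using assms(2) unfolding is_left_ideal_def by auto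
  show "skadd x y \<in> J" if "x \<in> J" "y \<in> J" for x y
    using assms(2) that unfolding is_left_ideal_def by auto
  fix p :: "'a poly" and x assume x: "x \<in> J"
  let ?f = "\<lambda>i. if i < n then p else 0"
  have "x \<in> skp n" using x assms(2) unfolding is_left_ideal_def by auto
  then have "skmult n ?f x = sksmult p x"
    unfolding skmult_eq_sum_comp[OF assms(1)] sksmult_def
    by (simp add: sum_distrib_left[symmetric] sum_comp[OF assms(1)])
  moreover have "?f \<in> skp n" unfolding skp_def by auto
  ultimately show "sksmult p x \<in> J" using assms(2) x unfolding is_left_ideal_def by metis
qed

lemma direct_summand_ring_imp_Fz:
  "0 < n \<Longrightarrow> direct_summand_ring n I \<Longrightarrow> direct_summand_Fz n I"
  unfolding direct_summand_ring_def direct_summand_Fz_def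
  using left_ideal_imp_Fz_submodule by blast

lemma skp_eq_sum_unit_e: "x \<in> skp n \<Longrightarrow> x j = (\<Sum>i<n. x i * unit_e i j)"
  unfolding skp_def unit_e_def by (cases "j < n") (auto simp: if_distrib[where f = "\<lambda>c. _ * c"] cong: if_cong)

lemma Fz_submodule_sum_mem:
  assumes "is_Fz_submodule n N" "finite K" "\<And>k. k \<in> K \<Longrightarrow> x k \<in> N"
  shows "(\<lambda>j. \<Sum>k\<in>K. p k * x k j) \<in> N"
  using assms(2,3)
proof (induction K rule: finite_induct)
  case empty
  then show ?case using assms(1) unfolding is_Fz_submodule_def skzero_def by simp
next
  case (insert k K)
  then have "skadd (sksmult (p k) (x k)) (\<lambda>j. \<Sum>k\<in>K. p k * x k j) \<in> N"
    using assms(1) unfolding is_Fz_submodule_def by simp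
  then show ?case using insert(1,2) by (simp add: skadd_def sksmult_def)
qed

section \<open>Right inverses and maximal minors\<close>

lemma bezout_coprime_family:
  fixes f :: "'b \<Rightarrow> 'a::euclidean_ring"
  assumes K: "finite K" and cop: "\<And>d. (\<forall>k\<in>K. d dvd f k) \<Longrightarrow> is_unit d"
  shows "\<exists>u. (\<Sum>k\<in>K. u k * f k) = 1"
proof -
  define C where "C = {x. \<exists>u. x = (\<Sum>k\<in>K. u k * f k)}"
  have f_mem: "f k \<in> C" if "k \<in> K" for k
    unfolding C_def using K that
    by (intro CollectI exI[of _ "\<lambda>j. if j = k then 1 else 0"]) (simp add: if_distrib[where f = "\<lambda>c. c * _"] cong: if_cong)
  have diff_mem: "x - c * y \<in> C" if xy: "x \<in> C" "y \<in> C" for x y c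
  proof -
    obtain u v where "x = (\<Sum>k\<in>K. u k * f k)" "y = (\<Sum>k\<in>K. v k * f k)"
      using xy unfolding C_def by blast
    then have "x - c * y = (\<Sum>k\<in>K. (u k - c * v k) * f k)"
      by (simp add: sum_subtractf sum_distrib_left left_diff_distrib mult.assoc)
    then show ?thesis unfolding C_def by (intro CollectI exI)
  qed
  have "\<exists>k\<in>K. f k \<noteq> 0"
    using cop[of 0] by auto
  then have ex: "\<exists>s. \<exists>x\<in>C. x \<noteq> 0 \<and> euclidean_size x = s" using f_mem by blast
  define s where "s = (LEAST s. \<exists>x\<in>C. x \<noteq> 0 \<and> euclidean_size x = s)"
  obtain p where p: "p \<in> C" "p \<noteq> 0" "euclidean_size p = s"
    using LeastI_ex[OF ex] unfolding s_def by blast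
  have "p dvd f k" if "k \<in> K" for k
  proof -
    have "f k mod p \<in> C"
      using diff_mem[OF f_mem[OF that] p(1), of "f k div p"] by (simp add: minus_div_mult_eq_mod)
    moreover have "\<not> (\<exists>x\<in>C. x \<noteq> 0 \<and> euclidean_size x = euclidean_size (f k mod p))"
      by (rule not_less_Least) (use mod_size_less[OF p(2), of "f k"] p(3) in \<open>simp add: s_def\<close>)
    ultimately have "f k mod p = 0" by blast
    then show ?thesis by (simp add: mod_eq_0_iff_dvd)
  qed
  then have "is_unit p" using cop by blast
  then obtain w where w: "1 = p * w" by (auto elim: dvdE)
  obtain u where u: "p = (\<Sum>k\<in>K. u k * f k)" using p(1) unfolding C_def by blast
  have "(\<Sum>k\<in>K. (w * u k) * f k) = 1"
    unfolding w u by (simp add: sum_distrib_left sum_distrib_right mult_ac)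
  then show ?thesis by (intro exI)
qed

lemma card_less_elems_less:
  fixes J :: "nat set"
  assumes "finite J" "i \<in> J"
  shows "card {a\<in>J. a < i} < card J"
proof (rule psubset_card_mono)
  show "finite J" by fact
  have "i \<notin> {a\<in>J. a < i}" by simp
  then show "{a\<in>J. a < i} \<subset> J" using assms(2) by blast
qed

lemma bij_betw_pick:
  assumes "finite J"
  shows "bij_betw (pick J) {..<card J} J"
proof (rule bij_betw_imageI)
  show "inj_on (pick J) {..<card J}"
    by (rule inj_onI) (metis lessThan_iff linorder_neqE_nat pick_mono_le less_irrefl)
  have "i \<in> pick J ` {..<card J}" if "i \<in> J" for i
    using pick_card_in_set[OF that] card_less_elems_less[OF assms that] by force
  then show "pick J ` {..<card J} = J" using pick_in_set_le by auto
qed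

lemma sum_pick:
  assumes "finite J"
  shows "(\<Sum>t<card J. F (pick J t)) = (\<Sum>i\<in>J. F i)"
  using sum.reindex_bij_betw[OF bij_betw_pick[OF assms], of F] by simp

lemma submatrix_cols:
  assumes Y: "Y \<in> carrier_mat r m" and J: "J \<subseteq> {..<m}"
  shows "submatrix Y UNIV J \<in> carrier_mat r (card J)"
    "\<And>l t. l < r \<Longrightarrow> t < card J \<Longrightarrow> submatrix Y UNIV J $$ (l,t) = Y $$ (l, pick J t)"
proof -
  have c1: "card {i. i < dim_row Y \<and> i \<in> UNIV} = r" using Y by simp
  have c2: "card {j. j < dim_col Y \<and> j \<in> J} = card J"
  proof -
    have "{j. j < dim_col Y \<and> j \<in> J} = J" using Y J by auto
    then show ?thesis by simp
  qed
  show "submatrix Y UNIV J \<in> carrier_mat r (card J)"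
    unfolding carrier_mat_def using dim_submatrix[of Y UNIV J] c1 c2 by simp
  fix l t assume "l < r" "t < card J"
  then show "submatrix Y UNIV J $$ (l,t) = Y $$ (l, pick J t)"
    using submatrix_index[of l Y UNIV t J] c1 c2 pick_UNIV by simp
qed

lemma submatrix_rows:
  assumes Y: "Y \<in> carrier_mat nr m" and I: "I \<subseteq> {..<nr}"
  shows "submatrix Y I UNIV \<in> carrier_mat (card I) m"
    "\<And>l t. l < card I \<Longrightarrow> t < m \<Longrightarrow> submatrix Y I UNIV $$ (l,t) = Y $$ (pick I l, t)"
proof -
  have c1: "card {i. i < dim_row Y \<and> i \<in> I} = card I"
  proof -
    have "{i. i < dim_row Y \<and> i \<in> I} = I" using Y I by auto
    then show ?thesis by simp
  qed
  have c2: "card {j. j < dim_col Y \<and> j \<in> UNIV} = m" using Y by simp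
  show "submatrix Y I UNIV \<in> carrier_mat (card I) m"
    unfolding carrier_mat_def using dim_submatrix[of Y I UNIV] c1 c2 by simp
  fix l t assume "l < card I" "t < m"
  then show "submatrix Y I UNIV $$ (l,t) = Y $$ (pick I l, t)"
    using submatrix_index[of l Y I t UNIV] c1 c2 pick_UNIV by simp
qed

lemma submatrix_index_carrier:
  assumes A: "A \<in> carrier_mat nr nc" and I: "I \<subseteq> {..<nr}" and J: "J \<subseteq> {..<nc}"
  shows "submatrix A I J \<in> carrier_mat (card I) (card J)"
    "\<And>k l. k < card I \<Longrightarrow> l < card J \<Longrightarrow> submatrix A I J $$ (k,l) = A $$ (pick I k, pick J l)"
proof -
  have c: "{i. i < dim_row A \<and> i \<in> I} = I" "{j. j < dim_col A \<and> j \<in> J} = J"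
    using A I J by auto
  show "submatrix A I J \<in> carrier_mat (card I) (card J)"
    using dim_submatrix[of A I J] unfolding carrier_mat_def c by simp
  show "submatrix A I J $$ (k,l) = A $$ (pick I k, pick J l)" if "k < card I" "l < card J" for k l
    using submatrix_index[of k A I l J] that unfolding c by simp
qed

lemma submatrix_submatrix_rows_cols:
  assumes "J \<subseteq> {..<dim_col A}"
  shows "submatrix (submatrix A I UNIV) UNIV J = submatrix A I J"
proof (rule eq_matI)
  have J: "{j. j < dim_col A \<and> j \<in> J} = J" using assms by auto
  show "dim_row (submatrix (submatrix A I UNIV) UNIV J) = dim_row (submatrix A I J)"
    "dim_col (submatrix (submatrix A I UNIV) UNIV J) = dim_col (submatrix A I J)"
    by (simp_all add: dim_submatrix)
  fix k l assume "k < dim_row (submatrix A I J)" "l < dim_col (submatrix A I J)"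
  moreover then have "pick J l < dim_col A"
    using pick_in_set_le[of l J] assms unfolding dim_submatrix J by auto
  ultimately show "submatrix (submatrix A I UNIV) UNIV J $$ (k, l) = submatrix A I J $$ (k, l)"
    by (simp add: dim_submatrix submatrix_index pick_UNIV)
qed

lemma sum_row_adj_submatrix_cols:
  fixes Y :: "'b::comm_ring_1 mat"
  assumes Y: "Y \<in> carrier_mat r m" and J: "J \<subseteq> {..<m}" "card J = r" and "l < r" "k < r"
  shows "(\<Sum>i<m. Y $$ (l,i) * (if i \<in> J then adj_mat (submatrix Y UNIV J) $$ (card {a\<in>J. a < i}, k) else 0))
    = (if l = k then det (submatrix Y UNIV J) else 0)"
proof -
  let ?A = "submatrix Y UNIV J"
  have A: "?A \<in> carrier_mat r r" using submatrix_cols(1)[OF Y J(1)] J(2) by simp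
  have "finite J" using J(1) finite_subset by blast
  have "(\<Sum>i<m. Y $$ (l,i) * (if i \<in> J then adj_mat ?A $$ (card {a\<in>J. a < i}, k) else 0))
      = (\<Sum>i\<in>{..<m} \<inter> J. Y $$ (l,i) * adj_mat ?A $$ (card {a\<in>J. a < i}, k))"
    by (simp add: sum.inter_restrict if_distrib[where f = "\<lambda>x. _ * x"] cong: if_cong)
  also have "{..<m} \<inter> J = J" using J(1) by auto
  also have "(\<Sum>i\<in>J. Y $$ (l,i) * adj_mat ?A $$ (card {a\<in>J. a < i}, k))
      = (\<Sum>t<card J. Y $$ (l, pick J t) * adj_mat ?A $$ (card {a\<in>J. a < pick J t}, k))"
    by (rule sum_pick[OF \<open>finite J\<close>, symmetric])
  also have "\<dots> = (\<Sum>t<r. Y $$ (l, pick J t) * adj_mat ?A $$ (t, k))"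
    using J(2) card_pick_le[of _ J] by simp
  also have "\<dots> = (\<Sum>t<r. ?A $$ (l, t) * adj_mat ?A $$ (t, k))"
    using submatrix_cols(2)[OF Y J(1) \<open>l < r\<close>] J(2) by simp
  also have "\<dots> = (?A * adj_mat ?A) $$ (l,k)"
    using A adj_mat(1)[OF A] \<open>l < r\<close> \<open>k < r\<close> by (simp add: scalar_prod_def atLeast0LessThan)
  also have "\<dots> = (if l = k then det ?A else 0)"
    using adj_mat(2)[OF A] \<open>l < r\<close> \<open>k < r\<close> by simp
  finally show ?thesis .
qed

text \<open>A combination \<open>\<Sum>\<^sub>J u\<^sub>J det Y\<^sub>J = 1\<close> of the maximal minors yields the right inverse
  \<open>\<Sum>\<^sub>J u\<^sub>J adj Y\<^sub>J\<close>, each adjugate padded with zero rows outside \<open>J\<close>.\<close>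

lemma right_inverse_of_minor_combination:
  fixes Y :: "'b::comm_ring_1 mat"
  assumes Y: "Y \<in> carrier_mat r m"
    and u: "(\<Sum>J\<in>{J. J \<subseteq> {..<m} \<and> card J = r}. u J * det (submatrix Y UNIV J)) = 1"
  shows "\<exists>\<beta>. \<forall>l<r. \<forall>k<r. (\<Sum>i<m. Y $$ (l,i) * \<beta> i k) = (if l = k then 1 else 0)"
proof (intro exI allI impI)
  define Js where "Js = {J. J \<subseteq> {..<m} \<and> card J = r}"
  fix l k assume "l < r" "k < r"
  let ?adj = "\<lambda>J i. if i \<in> J then adj_mat (submatrix Y UNIV J) $$ (card {a\<in>J. a < i}, k) else 0"
  have "(\<Sum>i<m. Y $$ (l,i) * (\<Sum>J\<in>Js. u J * ?adj J i))
      = (\<Sum>J\<in>Js. u J * (\<Sum>i<m. Y $$ (l,i) * ?adj J i))"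
    by (simp add: sum_distrib_left sum_distrib_right mult_ac sum.swap[of _ Js])
  also have "\<dots> = (\<Sum>J\<in>Js. u J * (if l = k then det (submatrix Y UNIV J) else 0))"
    using sum_row_adj_submatrix_cols[OF Y _ _ \<open>l < r\<close> \<open>k < r\<close>] unfolding Js_def
    by (intro sum.cong) auto
  also have "\<dots> = (if l = k then 1 else 0)"
    using u unfolding Js_def by auto
  finally show "(\<Sum>i<m. Y $$ (l,i) * (\<Sum>J\<in>Js. u J * ?adj J i)) = (if l = k then 1 else 0)" .
qed

lemma det_cols_eq_signof_minor:
  fixes Y :: "'b::comm_ring_1 mat"
  assumes Y: "Y \<in> carrier_mat r m" and f: "inj_on f {..<r}" "\<forall>k<r. f k < m"
  shows "\<exists>p. det (mat\<^sub>r r r (\<lambda>k. col Y (f k))) = signof p * det (submatrix Y UNIV (f ` {..<r}))"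
proof -
  define J where "J = f ` {..<r}"
  have Jm: "J \<subseteq> {..<m}" using f unfolding J_def by auto
  have cJ: "card J = r" unfolding J_def using card_image[OF f(1)] by simp
  have fJ: "finite J" unfolding J_def by simp
  define p where "p k = (if k < r then card {a\<in>J. a < f k} else k)" for k
  have p_lt: "k < r \<Longrightarrow> p k < r" for k
    unfolding p_def using card_less_elems_less[OF fJ, of "f k"] cJ unfolding J_def by auto
  have pick_p: "k < r \<Longrightarrow> pick J (p k) = f k" for k
    unfolding p_def using pick_card_in_set[of "f k" J] unfolding J_def by auto
  have inj: "inj_on p {0..<r}"
    using f(1) pick_p unfolding inj_on_def by (metis atLeastLessThan_iff lessThan_iff)
  moreover have "p ` {0..<r} = {0..<r}"
    by (rule endo_inj_surj) (use inj p_lt in auto)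
  ultimately have perm: "p permutes {0..<r}"
    by (intro bij_imp_permutes) (auto simp: bij_betw_def p_def)
  define T where "T = transpose_mat (submatrix Y UNIV J)"
  have SJ: "submatrix Y UNIV J \<in> carrier_mat r r" using submatrix_cols(1)[OF Y Jm] cJ by simp
  then have T: "T \<in> carrier_mat r r" unfolding T_def by simp
  have "mat\<^sub>r r r (\<lambda>k. col Y (f k)) = mat r r (\<lambda>(i,j). T $$ (p i, j))"
  proof (rule eq_matI)
    fix i j assume "i < dim_row (mat r r (\<lambda>(i,j). T $$ (p i, j)))" "j < dim_col (mat r r (\<lambda>(i,j). T $$ (p i, j)))"
    then have i: "i < r" and j: "j < r" by auto
    have "T $$ (p i, j) = Y $$ (j, f i)"
      unfolding T_def using SJ p_lt[OF i] j submatrix_cols(2)[OF Y Jm j] cJ pick_p[OF i] by simp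
    then show "mat\<^sub>r r r (\<lambda>k. col Y (f k)) $$ (i, j) = mat r r (\<lambda>(i,j). T $$ (p i, j)) $$ (i, j)"
      using i j Y f by simp
  qed auto
  then have "det (mat\<^sub>r r r (\<lambda>k. col Y (f k))) = signof p * det T"
    using det_permute_rows[OF T perm] by simp
  also have "det T = det (submatrix Y UNIV J)" unfolding T_def by (rule det_transpose[OF SJ])
  finally show ?thesis unfolding J_def by blast
qed

lemma dvd_det_cols_if_dvd_minors:
  fixes Y :: "'b::comm_ring_1 mat"
  assumes Y: "Y \<in> carrier_mat r m"
    and d: "\<forall>J. J \<subseteq> {..<m} \<and> card J = r \<longrightarrow> d dvd det (submatrix Y UNIV J)"
    and f: "\<forall>k<r. f k < m"
  shows "d dvd det (mat\<^sub>r r r (\<lambda>k. col Y (f k)))"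
proof (cases "inj_on f {..<r}")
  case False
  then obtain k1 k2 where k: "k1 < r" "k2 < r" "k1 \<noteq> k2" "f k1 = f k2"
    unfolding inj_on_def by auto
  have "det (mat\<^sub>r r r (\<lambda>k. col Y (f k))) = 0"
    by (rule det_identical_rows[OF _ k(3) k(1) k(2)]) (use k Y in \<open>auto intro!: eq_vecI\<close>)
  then show ?thesis by simp
next
  case True
  obtain p where "det (mat\<^sub>r r r (\<lambda>k. col Y (f k))) = signof p * det (submatrix Y UNIV (f ` {..<r}))"
    using det_cols_eq_signof_minor[OF Y True f] by blast
  moreover have "d dvd det (submatrix Y UNIV (f ` {..<r}))"
    using d f card_image[OF True] by (simp add: image_subset_iff)
  ultimately show ?thesis by simp
qed

text \<open>Expanding \<open>1 = det (Y B)\<close> multilinearly in the rows of \<open>(Y B)\<^sup>T\<close> writes it as a combination of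
  determinants of \<open>r\<close> columns of \<open>Y\<close>, each a multiple of a maximal minor.\<close>

lemma dvd_1_if_dvd_minors_of_right_invertible:
  fixes Y :: "'b::comm_ring_1 mat"
  assumes Y: "Y \<in> carrier_mat r m"
    and \<beta>: "\<forall>l<r. \<forall>k<r. (\<Sum>i<m. Y $$ (l,i) * \<beta> i k) = (if l = k then 1 else 0)"
    and d: "\<forall>J. J \<subseteq> {..<m} \<and> card J = r \<longrightarrow> d dvd det (submatrix Y UNIV J)"
  shows "d dvd 1"
proof -
  define a where "a k i = \<beta> i k \<cdot>\<^sub>v col Y i" for k i
  define F where "F = {f. (\<forall>i\<in>{0..<r}. f i \<in> {0..<m}) \<and> (\<forall>i. i \<notin> {0..<r} \<longrightarrow> f i = i)}"
  have a: "a \<in> {0..<r} \<rightarrow> {0..<m} \<rightarrow> carrier_vec r" unfolding a_def using Y by auto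
  have "1\<^sub>m r = mat\<^sub>r r r (\<lambda>k. finsum_vec TYPE('b) r (a k) {0..<m})"
  proof (rule eq_matI)
    fix k l assume "k < dim_row (mat\<^sub>r r r (\<lambda>k. finsum_vec TYPE('b) r (a k) {0..<m}))"
      "l < dim_col (mat\<^sub>r r r (\<lambda>k. finsum_vec TYPE('b) r (a k) {0..<m}))"
    then have k: "k < r" and l: "l < r" by auto
    have "mat\<^sub>r r r (\<lambda>k. finsum_vec TYPE('b) r (a k) {0..<m}) $$ (k,l) = finsum_vec TYPE('b) r (a k) {0..<m} $ l"
      using k l by simp
    also have "\<dots> = (\<Sum>i\<in>{0..<m}. a k i $ l)"
      by (rule index_finsum_vec) (use a k l in auto)
    also have "\<dots> = (\<Sum>i<m. Y $$ (l,i) * \<beta> i k)"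
      unfolding a_def using Y l by (auto simp: atLeast0LessThan mult.commute intro!: sum.cong)
    finally show "1\<^sub>m r $$ (k, l) = mat\<^sub>r r r (\<lambda>k. finsum_vec TYPE('b) r (a k) {0..<m}) $$ (k, l)"
      using \<beta> k l by auto
  qed auto
  then have "1 = det (mat\<^sub>r r r (\<lambda>k. finsum_vec TYPE('b) r (a k) {0..<m}))"
    by (metis det_one)
  also have "\<dots> = (\<Sum>f\<in>F. det (mat\<^sub>r r r (\<lambda>k. a k (f k))))"
    unfolding F_def by (rule det_linear_rows_sum[OF _ a]) simp
  finally have "1 = (\<Sum>f\<in>F. det (mat\<^sub>r r r (\<lambda>k. a k (f k))))" .
  moreover have "d dvd det (mat\<^sub>r r r (\<lambda>k. a k (f k)))" if "f \<in> F" for f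
  proof -
    have "det (mat\<^sub>r r r (\<lambda>k. a k (f k))) = prod (\<lambda>k. \<beta> (f k) k) {0..<r} * det (mat\<^sub>r r r (\<lambda>k. col Y (f k)))"
      unfolding a_def by (rule det_rows_mul) (use Y in auto)
    moreover have "d dvd det (mat\<^sub>r r r (\<lambda>k. col Y (f k)))"
      by (rule dvd_det_cols_if_dvd_minors[OF Y d]) (use that in \<open>auto simp: F_def\<close>)
    ultimately show ?thesis by simp
  qed
  then have "d dvd (\<Sum>f\<in>F. det (mat\<^sub>r r r (\<lambda>k. a k (f k))))" by (rule dvd_sum)
  ultimately show ?thesis by simp
qed

lemma right_inverse_iff_sum:
  fixes Y :: "'b::comm_ring_1 mat"
  assumes Y: "Y \<in> carrier_mat r m"
  shows "(\<exists>B\<in>carrier_mat m r. Y * B = 1\<^sub>m r) \<longleftrightarrow>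
    (\<exists>\<beta>. \<forall>l<r. \<forall>k<r. (\<Sum>i<m. Y $$ (l,i) * \<beta> i k) = (if l = k then 1 else 0))"
proof -
  have prod: "(Y * B) $$ (l,k) = (\<Sum>i<m. Y $$ (l,i) * B $$ (i,k))"
    if "B \<in> carrier_mat m r" "l < r" "k < r" for B l k
    using Y that by (simp add: scalar_prod_def atLeast0LessThan)
  show ?thesis
  proof
    assume "\<exists>B\<in>carrier_mat m r. Y * B = 1\<^sub>m r"
    then obtain B where B: "B \<in> carrier_mat m r" "Y * B = 1\<^sub>m r" by blast
    show "\<exists>\<beta>. \<forall>l<r. \<forall>k<r. (\<Sum>i<m. Y $$ (l,i) * \<beta> i k) = (if l = k then 1 else 0)"
    proof (intro exI allI impI)
      fix l k assume "l < r" "k < r"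
      then show "(\<Sum>i<m. Y $$ (l,i) * B $$ (i,k)) = (if l = k then 1 else 0)"
        using prod[OF B(1)] B(2) by (metis index_one_mat(1))
    qed
  next
    assume "\<exists>\<beta>. \<forall>l<r. \<forall>k<r. (\<Sum>i<m. Y $$ (l,i) * \<beta> i k) = (if l = k then 1 else 0)"
    then obtain \<beta> where \<beta>: "\<forall>l<r. \<forall>k<r. (\<Sum>i<m. Y $$ (l,i) * \<beta> i k) = (if l = k then 1 else 0)"
      by blast
    define B where "B = mat m r (\<lambda>(i,k). \<beta> i k)"
    have "B \<in> carrier_mat m r" unfolding B_def by simp
    moreover have "Y * B = 1\<^sub>m r"
      by (rule eq_matI) (use Y \<beta> prod[OF \<open>B \<in> carrier_mat m r\<close>] in \<open>auto simp: B_def\<close>)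
    ultimately show "\<exists>B\<in>carrier_mat m r. Y * B = 1\<^sub>m r" by blast
  qed
qed

lemma basic_iff_right_invertible:
  fixes Y :: "'a::field poly mat"
  assumes Y: "Y \<in> carrier_mat r m"
  shows "basic Y \<longleftrightarrow> (\<exists>B\<in>carrier_mat m r. Y * B = 1\<^sub>m r)"
proof -
  define Js where "Js = {J. J \<subseteq> {..<m} \<and> card J = r}"
  have basic: "basic Y \<longleftrightarrow> (\<forall>d. (\<forall>J\<in>Js. d dvd det (submatrix Y UNIV J)) \<longrightarrow> is_unit d)"
    unfolding basic_def Js_def using Y by auto
  show ?thesis
    unfolding right_inverse_iff_sum[OF Y]
  proof
    assume "basic Y"
    moreover have "finite Js"
      unfolding Js_def by (rule finite_subset[of _ "Pow {..<m}"]) auto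
    ultimately obtain u where "(\<Sum>J\<in>Js. u J * det (submatrix Y UNIV J)) = 1"
      using bezout_coprime_family[of Js "\<lambda>J. det (submatrix Y UNIV J)"] basic by blast
    then show "\<exists>\<beta>. \<forall>l<r. \<forall>k<r. (\<Sum>i<m. Y $$ (l,i) * \<beta> i k) = (if l = k then 1 else 0)"
      using right_inverse_of_minor_combination[OF Y] unfolding Js_def by blast
  next
    assume "\<exists>\<beta>. \<forall>l<r. \<forall>k<r. (\<Sum>i<m. Y $$ (l,i) * \<beta> i k) = (if l = k then 1 else 0)"
    then show "basic Y"
      unfolding basic Js_def using dvd_1_if_dvd_minors_of_right_invertible[OF Y] by blast
  qed
qed

section \<open>Polynomial matrices under \<open>z \<mapsto> z\<^sup>n\<close>\<close>

lemma det_scaled_eq: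
  fixes A B :: "'b::comm_ring_1 mat"
  assumes A: "A \<in> carrier_mat r r" and B: "B \<in> carrier_mat r r"
    and rel: "\<And>k l. k < r \<Longrightarrow> l < r \<Longrightarrow> c k * A $$ (k,l) = B $$ (k,l) * e l"
  shows "prod c {0..<r} * det A = prod e {0..<r} * det B"
proof -
  define C where "C = mat r r (\<lambda>(k,l). c k * A $$ (k,l))"
  have "C = mat\<^sub>r r r (\<lambda>k. c k \<cdot>\<^sub>v row A k)"
    unfolding C_def using A by (intro eq_matI) auto
  then have "det C = prod c {0..<r} * det (mat\<^sub>r r r (\<lambda>k. row A k))"
    using det_rows_mul[of "\<lambda>k. row A k" r c] A by auto
  also have "mat\<^sub>r r r (\<lambda>k. row A k) = A" using A by (intro eq_matI) auto
  finally have "det C = prod c {0..<r} * det A" .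
  have "transpose_mat C = mat\<^sub>r r r (\<lambda>l. e l \<cdot>\<^sub>v col B l)"
    unfolding C_def using A B rel by (intro eq_matI) (auto simp: mult.commute)
  then have "det (transpose_mat C) = prod e {0..<r} * det (mat\<^sub>r r r (\<lambda>l. col B l))"
    using det_rows_mul[of "\<lambda>l. col B l" r e] B by auto
  also have "mat\<^sub>r r r (\<lambda>l. col B l) = transpose_mat B" using B by (intro eq_matI) auto
  also have "det (transpose_mat B) = det B" by (rule det_transpose[OF B])
  also have "det (transpose_mat C) = det C" unfolding C_def by (rule det_transpose[of _ r]) simp
  finally show ?thesis using \<open>det C = prod c {0..<r} * det A\<close> by simp
qed

lemma prod_monom_1: "(\<Prod>k\<in>K. monom (1::'a::comm_semiring_1) (f k)) = monom 1 (\<Sum>k\<in>K. f k)"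
  by (induction K rule: infinite_finite_induct) (auto simp: mult_monom)

lemma comm_ring_hom_pcompose_monom:
  "0 < n \<Longrightarrow> comm_ring_hom (\<lambda>p::'a::comm_ring_1 poly. pcompose p (monom 1 n))"
  by unfold_locales (auto simp: pcompose_add pcompose_mult pcompose_1)

lemma comm_ring_hom_poly_0: "comm_ring_hom (\<lambda>p::'a::comm_ring_1 poly. poly p 0)"
  by unfold_locales auto

lemma coeff_pcompose_monom_1:
  fixes p :: "'a::comm_ring_1 poly"
  assumes n: "0 < n"
  shows "coeff (pcompose p (monom 1 n)) m = (if n dvd m then coeff p (m div n) else 0)"
proof (induction p arbitrary: m)
  case 0
  then show ?case by simp
next
  case (pCons a p)
  have "coeff (pcompose (pCons a p) (monom 1 n)) m = coeff ([:a:] + monom 1 n * pcompose p (monom 1 n)) m"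
    by (simp add: pcompose_pCons)
  also have "\<dots> = (if m = 0 then a else 0) + (if n \<le> m then coeff (pcompose p (monom 1 n)) (m - n) else 0)"
    by (simp add: coeff_monom_mult coeff_pCons split: nat.splits)
  also have "\<dots> = (if n dvd m then coeff (pCons a p) (m div n) else 0)"
  proof (cases "m = 0")
    case True then show ?thesis using n by simp
  next
    case m0: False
    show ?thesis
    proof (cases "n \<le> m")
      case False
      then have "\<not> n dvd m" using m0 by (meson dvd_imp_le not_le not_gr0)
      then show ?thesis using False m0 by simp
    next
      case True
      have dv: "n dvd m \<longleftrightarrow> n dvd (m - n)" using True by (simp add: dvd_minus_self)
      have dm: "m div n = Suc ((m - n) div n)" using True n by (simp add: div_if)
      show ?thesis using True m0 by (simp add: pCons.IH dv dm)
    qed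
  qed
  finally show ?case .
qed

lemma coeff_pcompose_monom_mult_monom:
  fixes X :: "'a::comm_ring_1 poly"
  assumes "0 < n"
  shows "coeff (pcompose X (monom 1 n) * monom 1 b) m
      = (if b \<le> m \<and> n dvd (m - b) then coeff X ((m - b) div n) else 0)"
  by (simp add: mult.commute[of _ "monom 1 b"] coeff_monom_mult coeff_pcompose_monom_1[OF assms])

lemma poly_pcompose_monom_0:
  assumes "0 < n"
  shows "poly (pcompose p (monom 1 n)) 0 = poly p 0"
  using assms by (simp add: poly_pcompose poly_0_coeff_0[of "monom 1 n"])

lemma dvd_monom_mult_cancel:
  fixes D y :: "'a::field poly"
  assumes "D dvd monom 1 e * y" and D0: "poly D 0 \<noteq> 0"
  shows "D dvd y"
proof -
  have cancel: "D dvd z" if dz: "D dvd [:0, 1:] * z" for z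
  proof -
    obtain k where k: "[:0, 1:] * z = D * k" using dz by (rule dvdE)
    have "poly D 0 * poly k 0 = 0" using arg_cong[OF k, of "\<lambda>p. poly p 0"] by simp
    then have "[:0, 1:] dvd k" using D0 by (simp add: dvd_iff_poly_eq_0)
    then obtain k' where "k = [:0, 1:] * k'" by (rule dvdE)
    then have "[:0, 1:] * z = [:0, 1:] * (D * k')" using k by (simp add: mult_ac)
    then have "z = D * k'" by (rule mult_left_cancel[THEN iffD1, rotated]) simp
    then show ?thesis by simp
  qed
  show ?thesis
    using assms(1)
  proof (induction e arbitrary: y)
    case (Suc e)
    have "monom 1 (Suc e) * y = [:0, 1:] * (monom 1 e * y)" by (simp add: monom_Suc)
    then show ?case using Suc cancel by metis
  qed simp
qed

lemma pcompose_dvd_pcompose: "d dvd p \<Longrightarrow> pcompose d q dvd pcompose p q"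
  by (auto elim!: dvdE simp: pcompose_mult)

lemma is_unit_if_is_unit_pcompose_monom:
  fixes d :: "'a::field poly"
  assumes "0 < n" "is_unit (pcompose d (monom 1 n))"
  shows "is_unit d"
proof -
  have "pcompose d (monom 1 n) \<noteq> 0" using assms(2) by auto
  then have "d \<noteq> 0" "degree (pcompose d (monom 1 n)) = 0"
    using assms(2) by (auto simp: is_unit_iff_degree)
  then show ?thesis using assms(1) by (simp add: is_unit_iff_degree degree_pcompose degree_monom_eq)
qed

text \<open>Divisors of \<open>h\<^sub>Q\<close> and of \<open>h\<^sub>X(z\<^sup>n)\<close> agree up to powers of \<open>z\<close>; the nonzero constant term of
  \<open>h\<^sub>X k\<^sub>0\<close> keeps every common divisor prime to \<open>z\<close>.\<close>

lemma coprime_family_pcompose_iff: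
  fixes hQ hX :: "'b \<Rightarrow> 'a::field poly"
  assumes n: "0 < n" and K: "finite K" "k\<^sub>0 \<in> K"
    and rel: "\<And>k. k \<in> K \<Longrightarrow> monom 1 e * hQ k = monom 1 (e' k) * pcompose (hX k) (monom 1 n)"
    and e': "e' k\<^sub>0 = e" and h0: "poly (hX k\<^sub>0) 0 \<noteq> 0"
  shows "(\<forall>d. (\<forall>k\<in>K. d dvd hQ k) \<longrightarrow> is_unit d) \<longleftrightarrow> (\<forall>d. (\<forall>k\<in>K. d dvd hX k) \<longrightarrow> is_unit d)"
proof (intro iffI allI impI)
  fix d :: "'a poly"
  assume cop: "\<forall>d. (\<forall>k\<in>K. d dvd hQ k) \<longrightarrow> is_unit d" and d: "\<forall>k\<in>K. d dvd hX k"
  let ?D = "pcompose d (monom 1 n)"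
  have "d dvd hX k\<^sub>0" using d K(2) by blast
  then have "poly ?D 0 \<noteq> 0" using h0 by (auto simp: poly_pcompose_monom_0[OF n] elim: dvdE)
  have "?D dvd monom 1 e * hQ k" if "k \<in> K" for k
    unfolding rel[OF that] using d that by (intro dvd_mult pcompose_dvd_pcompose) blast
  then have "\<forall>k\<in>K. ?D dvd hQ k"
    using dvd_monom_mult_cancel[OF _ \<open>poly ?D 0 \<noteq> 0\<close>] by blast
  then show "is_unit d" using cop is_unit_if_is_unit_pcompose_monom[OF n] by blast
next
  fix d :: "'a poly"
  assume cop: "\<forall>d. (\<forall>k\<in>K. d dvd hX k) \<longrightarrow> is_unit d" and d: "\<forall>k\<in>K. d dvd hQ k"
  have "hQ k\<^sub>0 = pcompose (hX k\<^sub>0) (monom 1 n)" using rel[OF K(2)] e' by simp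
  moreover have "d dvd hQ k\<^sub>0" using d K(2) by blast
  ultimately have "poly d 0 \<noteq> 0"
    using h0 poly_pcompose_monom_0[OF n, of "hX k\<^sub>0"] by (auto elim: dvdE)
  have dX: "d dvd pcompose (hX k) (monom 1 n)" if "k \<in> K" for k
  proof -
    have "d dvd monom 1 e * hQ k" using d that by simp
    then show ?thesis unfolding rel[OF that] by (rule dvd_monom_mult_cancel) fact
  qed
  obtain u where u: "(\<Sum>k\<in>K. u k * hX k) = 1"
    using bezout_coprime_family[OF K(1)] cop by blast
  have "(\<Sum>k\<in>K. pcompose (u k) (monom 1 n) * pcompose (hX k) (monom 1 n)) = 1"
    using arg_cong[OF u, of "\<lambda>p. pcompose p (monom 1 n)"] by (simp add: pcompose_sum pcompose_mult pcompose_1)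
  moreover have "d dvd (\<Sum>k\<in>K. pcompose (u k) (monom 1 n) * pcompose (hX k) (monom 1 n))"
    using dX by (intro dvd_sum dvd_mult)
  ultimately show "is_unit d" by (simp only:)
qed

lemma poly_det_principal_submatrix_0:
  fixes M :: "'a::field poly mat"
  assumes M: "in_M n M" and S: "S \<subseteq> {..<n}" and diag: "\<And>a. a \<in> S \<Longrightarrow> poly (M $$ (a, a)) 0 \<noteq> 0"
  shows "poly (det (submatrix M S S)) 0 \<noteq> 0"
proof -
  interpret ev: comm_ring_hom "\<lambda>p::'a poly. poly p 0" by (rule comm_ring_hom_poly_0)
  have Mc: "M \<in> carrier_mat n n" using M unfolding in_M_def by simp
  let ?A = "submatrix M S S"
  let ?Z = "map_mat (\<lambda>p. poly p 0) ?A"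
  have A: "?A \<in> carrier_mat (card S) (card S)" by (rule submatrix_index_carrier(1)[OF Mc S S])
  then have Z: "?Z \<in> carrier_mat (card S) (card S)" by simp
  have pick: "pick S i \<in> S" "pick S i < n" if "i < card S" for i
    using pick_in_set_le[OF that] S by auto
  have entry: "?Z $$ (i, j) = poly (M $$ (pick S i, pick S j)) 0" if "i < card S" "j < card S" for i j
    using A that submatrix_index_carrier(2)[OF Mc S S that] by simp
  have "upper_triangular ?Z"
    unfolding upper_triangular_def
  proof (intro allI impI)
    fix i j assume "i < dim_row ?Z" "j < i"
    then have "i < card S" "j < card S" using Z by auto
    moreover have "pick S j < pick S i" using pick_mono_le[OF \<open>i < card S\<close> \<open>j < i\<close>] .
    ultimately show "?Z $$ (i, j) = 0"
      using M pick entry unfolding in_M_def by simp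
  qed
  then have "det ?Z = prod_list (diag_mat ?Z)" by (rule det_upper_triangular[OF _ Z])
  moreover have "0 \<notin> set (diag_mat ?Z)"
    using Z entry diag pick unfolding diag_mat_def by auto
  ultimately show ?thesis using ev.hom_det[of ?A] by (simp add: prod_list_zero_iff)
qed

section \<open>Direct summands and right inverses\<close>

locale skew_generator =
  fixes n :: nat and g :: "nat \<Rightarrow> 'a::field poly"
  assumes n_pos: "0 < n" and g_skp: "g \<in> skp n"
begin

abbreviation gc :: "nat \<Rightarrow> nat \<Rightarrow> 'a poly" where "gc \<equiv> comp n g"
abbreviation Tg :: "nat set" where "Tg \<equiv> supp n g"
abbreviation Ig :: "(nat \<Rightarrow> 'a poly) set" where "Ig \<equiv> range (lin_comb n gc)"

lemma Tg_subset: "Tg \<subseteq> {..<n}"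
  unfolding supp_def by auto

lemma finite_Tg: "finite Tg"
  using Tg_subset finite_subset by blast

lemma gc_eq_0_outside: "a \<notin> Tg \<Longrightarrow> gc a = (\<lambda>j. 0)"
  using comp_eq_0_index_outside[OF n_pos, of a g] unfolding supp_def skzero_def
  by (cases "a < n") auto

lemma lin_comb_Tg: "lin_comb n gc f j = (\<Sum>a\<in>Tg. f a * gc a j)"
  unfolding lin_comb_def by (rule sum.mono_neutral_right) (use Tg_subset gc_eq_0_outside in auto)

lemma lin_comb_delta: "a < n \<Longrightarrow> lin_comb n gc (\<lambda>b. if b = a then 1 else 0) = gc a"
  unfolding lin_comb_def by (simp add: if_distrib[where f = "\<lambda>c. c * _"] cong: if_cong)

lemma gc_mem_Ig: "gc a \<in> Ig"
proof (cases "a < n")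
  case True
  then show ?thesis by (metis lin_comb_delta rangeI)
next
  case False
  then have "gc a = lin_comb n gc (\<lambda>b. 0)"
    unfolding lin_comb_def using comp_eq_0_index_outside[OF n_pos, of a g] by simp
  then show ?thesis by simp
qed

lemma zero_mem_Ig: "(\<lambda>j. 0) \<in> Ig"
  using rangeI[of "lin_comb n gc" "\<lambda>b. 0"] by (simp add: lin_comb_def)

lemma add_mem_Ig:
  assumes "x \<in> Ig" "y \<in> Ig"
  shows "(\<lambda>j. x j + y j) \<in> Ig"
proof -
  obtain f f' where "x = lin_comb n gc f" "y = lin_comb n gc f'" using assms by auto
  then have "(\<lambda>j. x j + y j) = lin_comb n gc (\<lambda>a. f a + f' a)"
    unfolding lin_comb_def by (auto simp: sum.distrib algebra_simps)
  then show ?thesis by simp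
qed

lemma mult_mem_Ig:
  assumes "x \<in> Ig"
  shows "(\<lambda>j. p * x j) \<in> Ig"
proof -
  obtain f where "x = lin_comb n gc f" using assms by auto
  then have "(\<lambda>j. p * x j) = lin_comb n gc (\<lambda>a. p * f a)"
    unfolding lin_comb_def by (auto simp: sum_distrib_left algebra_simps)
  then show ?thesis by simp
qed

lemma diff_mem_Ig: "x \<in> Ig \<Longrightarrow> y \<in> Ig \<Longrightarrow> (\<lambda>j. x j - y j) \<in> Ig"
  using add_mem_Ig[of x "\<lambda>j. (- 1) * y j"] mult_mem_Ig[of y "- 1"] by simp

lemma sum_mem_Ig: "finite K \<Longrightarrow> (\<And>k. k \<in> K \<Longrightarrow> x k \<in> Ig) \<Longrightarrow> (\<lambda>j. \<Sum>k\<in>K. x k j) \<in> Ig"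
proof (induction K rule: finite_induct)
  case (insert k K)
  then show ?case using add_mem_Ig[of "x k" "\<lambda>j. \<Sum>k\<in>K. x k j"] by simp
qed (simp add: zero_mem_Ig)

lemma Ig_subset_skp: "Ig \<subseteq> skp n"
  unfolding lin_comb_def skp_def by (auto simp: comp_eq_0_outside)

lemma comp_mult_gc_mem_Ig: "comp n (\<lambda>j. p * gc a j) c \<in> Ig"
proof (induction p arbitrary: c)
  case 0
  then show ?case using zero_mem_Ig by (simp add: comp_zero)
next
  case (pCons e p)
  show ?case
  proof (cases "c < n")
    case True
    have "comp n (\<lambda>j. pCons e p * gc a j) c
        = (\<lambda>j. [:e:] * comp n (gc a) c j + [:0, 1:] * comp n (\<lambda>j. p * gc a j) (Suc c mod n) j)"
      using True by (intro ext) (simp add: comp_add comp_smult comp_pCons_0)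
    also have "\<dots> \<in> Ig"
      using gc_mem_Ig zero_mem_Ig
      by (intro add_mem_Ig mult_mem_Ig pCons.IH) (simp add: comp_comp)
    finally show ?thesis .
  next
    case False
    show ?thesis unfolding comp_eq_0_index_outside[OF n_pos leI[OF False]] by (rule zero_mem_Ig)
  qed
qed

lemma comp_mem_Ig:
  assumes "x \<in> Ig"
  shows "comp n x c \<in> Ig"
proof -
  obtain f where "x = lin_comb n gc f" using assms by auto
  then have "comp n x c = (\<lambda>j. \<Sum>a<n. comp n (\<lambda>j. f a * gc a j) c j)"
    unfolding lin_comb_def using comp_sum[of n "\<lambda>a j. f a * gc a j" "{..<n}" c] by auto
  also have "\<dots> \<in> Ig" by (intro sum_mem_Ig comp_mult_gc_mem_Ig) simp
  finally show ?thesis .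
qed

definition comps_right_invertible :: bool where
  "comps_right_invertible \<longleftrightarrow>
     (\<exists>\<beta>. \<forall>a\<in>Tg. \<forall>a'\<in>Tg. (\<Sum>i<n. gc a i * \<beta> i a') = (if a = a' then 1 else 0))"

definition comps_independent :: bool where
  "comps_independent \<longleftrightarrow> (\<forall>c. (\<forall>j. (\<Sum>a\<in>Tg. c a * gc a j) = 0) \<longrightarrow> (\<forall>a\<in>Tg. c a = 0))"

text \<open>For a right inverse \<open>\<beta>\<close>, \<open>lin_proj \<beta>\<close> is an \<open>\<bbbF>[z]\<close>-linear retraction onto \<open>\<langle>g\<rangle>\<close> that does
  not commute with the idempotents \<open>e\<^sub>c\<close>; its componentwise assembly \<open>proj \<beta>\<close> does.\<close>

definition lin_proj :: "(nat \<Rightarrow> nat \<Rightarrow> 'a poly) \<Rightarrow> (nat \<Rightarrow> 'a poly) \<Rightarrow> nat \<Rightarrow> 'a poly" where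
  "lin_proj \<beta> y = (\<lambda>j. \<Sum>a\<in>Tg. (\<Sum>i<n. y i * \<beta> i a) * gc a j)"

definition proj :: "(nat \<Rightarrow> nat \<Rightarrow> 'a poly) \<Rightarrow> (nat \<Rightarrow> 'a poly) \<Rightarrow> nat \<Rightarrow> 'a poly" where
  "proj \<beta> y = (\<lambda>j. \<Sum>c<n. comp n (lin_proj \<beta> (comp n y c)) c j)"

lemma lin_proj_add: "lin_proj \<beta> (\<lambda>j. x j + y j) = (\<lambda>j. lin_proj \<beta> x j + lin_proj \<beta> y j)"
  unfolding lin_proj_def by (simp add: sum.distrib distrib_right)

lemma lin_proj_mult: "lin_proj \<beta> (\<lambda>j. p * x j) = (\<lambda>j. p * lin_proj \<beta> x j)"
  unfolding lin_proj_def by (simp add: sum_distrib_left sum_distrib_right mult.assoc)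

lemma lin_proj_zero: "lin_proj \<beta> (\<lambda>j. 0) = (\<lambda>j. 0)"
  using lin_proj_mult[of \<beta> 0 "\<lambda>j. 0"] by simp

lemma lin_proj_mem_Ig: "lin_proj \<beta> y \<in> Ig"
  unfolding lin_proj_def by (intro sum_mem_Ig mult_mem_Ig gc_mem_Ig finite_Tg)

lemma proj_mem_Ig: "proj \<beta> y \<in> Ig"
  unfolding proj_def by (intro sum_mem_Ig comp_mem_Ig lin_proj_mem_Ig) simp

lemma proj_add: "proj \<beta> (\<lambda>j. x j + y j) = (\<lambda>j. proj \<beta> x j + proj \<beta> y j)"
proof -
  have "\<And>c. comp n (\<lambda>j. x j + y j) c = (\<lambda>j. comp n x c j + comp n y c j)"
    by (rule ext) (rule comp_add)
  then show ?thesis unfolding proj_def by (simp add: lin_proj_add comp_add sum.distrib)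
qed

lemma proj_zero: "proj \<beta> (\<lambda>j. 0) = (\<lambda>j. 0)"
  unfolding proj_def by (simp add: comp_zero lin_proj_zero)

lemma proj_smult: "proj \<beta> (\<lambda>j. smult e (x j)) = (\<lambda>j. smult e (proj \<beta> x j))"
proof -
  have "\<And>c. comp n (\<lambda>j. smult e (x j)) c = (\<lambda>j. smult e (comp n x c j))"
    by (rule ext) (rule comp_smult)
  moreover have "\<And>y. lin_proj \<beta> (\<lambda>j. smult e (y j)) = (\<lambda>j. smult e (lin_proj \<beta> y j))"
    using lin_proj_mult[of \<beta> "[:e:]"] by simp
  ultimately show ?thesis unfolding proj_def by (simp add: comp_smult smult_sum_distrib)
qed

lemma proj_pCons_0: "proj \<beta> (\<lambda>j. pCons 0 (x j)) = (\<lambda>j. pCons 0 (proj \<beta> x j))"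
proof
  fix j
  have shift: "comp n (\<lambda>j. pCons 0 (y j)) c = (\<lambda>j. pCons 0 (comp n y (Suc c mod n) j))"
    if "c < n" for c y using that by (intro ext comp_pCons_0)
  have lin: "lin_proj \<beta> (\<lambda>j. pCons 0 (y j)) = (\<lambda>j. pCons 0 (lin_proj \<beta> y j))" for y
    using lin_proj_mult[of \<beta> "[:0, 1:]" y] by simp
  have "proj \<beta> (\<lambda>j. pCons 0 (x j)) j
      = (\<Sum>c<n. pCons 0 (comp n (lin_proj \<beta> (comp n x (Suc c mod n))) (Suc c mod n) j))"
    unfolding proj_def using n_pos by (intro sum.cong) (simp_all add: shift lin)
  also have "\<dots> = pCons 0 (\<Sum>c<n. comp n (lin_proj \<beta> (comp n x c)) c j)"
    using sum_rotate[OF n_pos, of "\<lambda>c. comp n (lin_proj \<beta> (comp n x c)) c j"]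
    by (simp flip: pCons_0_sum)
  finally show "proj \<beta> (\<lambda>j. pCons 0 (x j)) j = pCons 0 (proj \<beta> x j)"
    unfolding proj_def .
qed

lemma proj_mult: "proj \<beta> (\<lambda>j. p * x j) = (\<lambda>j. p * proj \<beta> x j)"
proof (induction p)
  case 0
  then show ?case using proj_zero by simp
next
  case (pCons e p)
  have "proj \<beta> (\<lambda>j. pCons e p * x j) = proj \<beta> (\<lambda>j. smult e (x j) + pCons 0 (p * x j))"
    by simp
  also have "\<dots> = (\<lambda>j. pCons e p * proj \<beta> x j)"
    by (simp add: proj_add proj_smult proj_pCons_0 pCons.IH)
  finally show ?case .
qed

lemma proj_diff: "proj \<beta> (\<lambda>j. x j - y j) = (\<lambda>j. proj \<beta> x j - proj \<beta> y j)"
  using proj_add[of \<beta> x "\<lambda>j. (- 1) * y j"] proj_mult[of \<beta> "- 1" y] by simp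

lemma proj_sum:
  "finite K \<Longrightarrow> proj \<beta> (\<lambda>j. \<Sum>k\<in>K. x k j) = (\<lambda>j. \<Sum>k\<in>K. proj \<beta> (x k) j)"
proof (induction K rule: finite_induct)
  case (insert k K)
  then show ?case using proj_add[of \<beta> "x k" "\<lambda>j. \<Sum>k\<in>K. x k j"] by simp
qed (simp add: proj_zero)

lemma proj_comp_eq:
  assumes "c < n"
  shows "proj \<beta> (comp n y c) = comp n (lin_proj \<beta> (comp n y c)) c"
proof
  fix j
  have "proj \<beta> (comp n y c) j = (\<Sum>d<n. if d = c then comp n (lin_proj \<beta> (comp n y c)) c j else 0)"
    unfolding proj_def by (intro sum.cong refl) (simp add: comp_comp lin_proj_zero comp_zero)
  then show "proj \<beta> (comp n y c) j = comp n (lin_proj \<beta> (comp n y c)) c j"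
    using assms by simp
qed

lemma proj_comp:
  assumes "c < n"
  shows "proj \<beta> (comp n y c) = comp n (proj \<beta> y) c"
proof
  fix j
  have "comp n (proj \<beta> y) c j = (\<Sum>d<n. comp n (comp n (lin_proj \<beta> (comp n y d)) d) c j)"
    unfolding proj_def comp_sum ..
  also have "\<dots> = (\<Sum>d<n. if d = c then comp n (lin_proj \<beta> (comp n y c)) c j else 0)"
    by (intro sum.cong refl) (simp add: comp_comp)
  finally show "proj \<beta> (comp n y c) j = comp n (proj \<beta> y) c j"
    using assms by (simp add: proj_comp_eq)
qed

lemma proj_gc:
  assumes "\<forall>a\<in>Tg. \<forall>a'\<in>Tg. (\<Sum>i<n. gc a i * \<beta> i a') = (if a = a' then 1 else 0)"
  shows "proj \<beta> (gc a) = gc a"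
proof (cases "a \<in> Tg")
  case True
  have "lin_proj \<beta> (gc a) = gc a"
  proof
    fix j
    have "lin_proj \<beta> (gc a) j = (\<Sum>a'\<in>Tg. if a' = a then gc a' j else 0)"
      unfolding lin_proj_def by (rule sum.cong) (use assms True in auto)
    also have "\<dots> = gc a j" using True finite_Tg by simp
    finally show "lin_proj \<beta> (gc a) j = gc a j" .
  qed
  moreover have "a < n" using True Tg_subset by auto
  ultimately show ?thesis by (simp add: proj_comp_eq comp_comp)
next
  case False
  then show ?thesis using gc_eq_0_outside proj_zero by simp
qed

lemma proj_id:
  assumes "\<forall>a\<in>Tg. \<forall>a'\<in>Tg. (\<Sum>i<n. gc a i * \<beta> i a') = (if a = a' then 1 else 0)"
    and "x \<in> Ig"
  shows "proj \<beta> x = x"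
proof -
  obtain f where x: "x = lin_comb n gc f" using assms(2) by auto
  show ?thesis
    unfolding x lin_comb_def by (simp add: proj_sum proj_mult proj_gc[OF assms(1)])
qed

lemma ker_proj_left_ideal: "is_left_ideal n {h \<in> skp n. proj \<beta> h = (\<lambda>j. 0)}"
  unfolding is_left_ideal_def
proof (intro conjI ballI)
  show "skzero \<in> {h \<in> skp n. proj \<beta> h = (\<lambda>j. 0)}"
    unfolding skzero_def skp_def using proj_zero by auto
  fix x y assume x: "x \<in> {h \<in> skp n. proj \<beta> h = (\<lambda>j. 0)}"
  show "skadd x y \<in> {h \<in> skp n. proj \<beta> h = (\<lambda>j. 0)}" if "y \<in> {h \<in> skp n. proj \<beta> h = (\<lambda>j. 0)}"
    using x that unfolding skadd_def skp_def by (auto simp: proj_add)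
  show "skmult n y x \<in> {h \<in> skp n. proj \<beta> h = (\<lambda>j. 0)}" if "y \<in> skp n"
  proof -
    have "proj \<beta> (skmult n y x) = (\<lambda>j. \<Sum>i<n. y i * proj \<beta> (comp n x i) j)"
      unfolding skmult_eq_sum_comp[OF n_pos] by (simp add: proj_sum proj_mult)
    also have "\<dots> = (\<lambda>j. 0)"
      using x by (auto simp: proj_comp comp_zero)
    finally show ?thesis unfolding skp_def skmult_def by auto
  qed
qed auto

lemma direct_sum_ker_proj:
  assumes \<beta>: "\<forall>a\<in>Tg. \<forall>a'\<in>Tg. (\<Sum>i<n. gc a i * \<beta> i a') = (if a = a' then 1 else 0)"
  shows "internal_direct_sum n Ig {h \<in> skp n. proj \<beta> h = (\<lambda>j. 0)}"
  unfolding internal_direct_sum_def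
proof
  have "x = (\<lambda>j. 0)" if "x \<in> Ig" "proj \<beta> x = (\<lambda>j. 0)" for x
    using proj_id[OF \<beta> that(1)] that(2) by simp
  then show "Ig \<inter> {h \<in> skp n. proj \<beta> h = (\<lambda>j. 0)} = {skzero}"
    using zero_mem_Ig proj_zero unfolding skzero_def skp_def by blast
  show "{skadd x y |x y. x \<in> Ig \<and> y \<in> {h \<in> skp n. proj \<beta> h = (\<lambda>j. 0)}} = skp n"
  proof
    show "{skadd x y |x y. x \<in> Ig \<and> y \<in> {h \<in> skp n. proj \<beta> h = (\<lambda>j. 0)}} \<subseteq> skp n"
      using Ig_subset_skp unfolding skadd_def skp_def by auto
    show "skp n \<subseteq> {skadd x y |x y. x \<in> Ig \<and> y \<in> {h \<in> skp n. proj \<beta> h = (\<lambda>j. 0)}}"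
    proof
      fix h :: "nat \<Rightarrow> 'a poly" assume h: "h \<in> skp n"
      let ?y = "\<lambda>j. h j - proj \<beta> h j"
      have "proj \<beta> ?y = (\<lambda>j. 0)"
        by (simp add: proj_diff proj_id[OF \<beta> proj_mem_Ig])
      moreover have "?y \<in> skp n"
        using h proj_mem_Ig[of \<beta> h] Ig_subset_skp unfolding skp_def by auto
      moreover have "h = skadd (proj \<beta> h) ?y" unfolding skadd_def by simp
      ultimately show "h \<in> {skadd x y |x y. x \<in> Ig \<and> y \<in> {h \<in> skp n. proj \<beta> h = (\<lambda>j. 0)}}"
        using proj_mem_Ig by blast
    qed
  qed
qed

lemma direct_summand_ring_if_right_invertible:
  "comps_right_invertible \<Longrightarrow> direct_summand_ring n Ig"
  unfolding comps_right_invertible_def direct_summand_ring_def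
  using ker_proj_left_ideal direct_sum_ker_proj by blast

lemma lin_comb_unique:
  assumes "comps_independent" "lin_comb n gc f = lin_comb n gc f'" "a \<in> Tg"
  shows "f a = f' a"
proof -
  have "(\<Sum>b\<in>Tg. (f b - f' b) * gc b j) = lin_comb n gc f j - lin_comb n gc f' j" for j
    unfolding lin_comb_Tg[symmetric] lin_comb_diff[symmetric] ..
  then have "(\<Sum>b\<in>Tg. (f b - f' b) * gc b j) = 0" for j
    using assms(2) by simp
  then show ?thesis
    using spec[OF assms(1)[unfolded comps_independent_def], of "\<lambda>b. f b - f' b"] assms(3) by auto
qed

lemma decompose_unit_e:
  assumes "internal_direct_sum n Ig N"
  obtains V \<Lambda> where "\<And>i. i < n \<Longrightarrow> V i \<in> N"
    "\<And>i. i < n \<Longrightarrow> unit_e i = skadd (lin_comb n gc (\<Lambda> i)) (V i)"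
proof -
  have "\<forall>i\<in>{..<n}. \<exists>f v. v \<in> N \<and> unit_e i = skadd (lin_comb n gc f) v"
  proof
    fix i assume "i \<in> {..<n}"
    then have "unit_e i \<in> skp n" unfolding unit_e_def skp_def by auto
    then show "\<exists>f v. v \<in> N \<and> unit_e i = skadd (lin_comb n gc f) v"
      using assms unfolding internal_direct_sum_def by blast
  qed
  then obtain \<Lambda> where "\<forall>i\<in>{..<n}. \<exists>v. v \<in> N \<and> unit_e i = skadd (lin_comb n gc (\<Lambda> i)) v"
    by (metis bchoice)
  then obtain V where "\<forall>i\<in>{..<n}. V i \<in> N \<and> unit_e i = skadd (lin_comb n gc (\<Lambda> i)) (V i)"
    by (metis bchoice)
  then show ?thesis using that by auto
qed

text \<open>Expanding \<open>g\<^bsup>(a)\<^esup> = \<Sum>\<^sub>i g\<^bsup>(a)\<^esup>\<^sub>i e\<^sub>i\<close> along the decompositions of the \<open>e\<^sub>i\<close> leaves a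
  remainder in \<open>N\<close> that also lies in \<open>\<langle>g\<rangle>\<close>, hence vanishes.\<close>

lemma lin_comb_eq_gc_if_complement:
  assumes N: "is_Fz_submodule n N" "internal_direct_sum n Ig N"
    and V: "\<And>i. i < n \<Longrightarrow> V i \<in> N"
    and \<Lambda>V: "\<And>i. i < n \<Longrightarrow> unit_e i = skadd (lin_comb n gc (\<Lambda> i)) (V i)"
  shows "lin_comb n gc (\<lambda>b. \<Sum>i<n. gc a i * \<Lambda> i b) = gc a"
proof -
  let ?c = "\<lambda>b. \<Sum>i<n. gc a i * \<Lambda> i b"
  let ?w = "\<lambda>j. \<Sum>i<n. gc a i * V i j"
  have decomp: "gc a = (\<lambda>j. lin_comb n gc ?c j + ?w j)"
  proof
    fix j
    have "gc a j = (\<Sum>i<n. gc a i * (lin_comb n gc (\<Lambda> i) j + V i j))"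
      unfolding skp_eq_sum_unit_e[OF comp_skp, of n g a j] by (intro sum.cong refl) (simp add: \<Lambda>V skadd_def)
    also have "\<dots> = (\<Sum>i<n. gc a i * lin_comb n gc (\<Lambda> i) j) + ?w j"
      by (simp add: distrib_left sum.distrib)
    also have "(\<Sum>i<n. gc a i * lin_comb n gc (\<Lambda> i) j) = lin_comb n gc ?c j"
      unfolding lin_comb_def by (simp add: sum_distrib_left sum_distrib_right mult.assoc) (rule sum.swap)
    finally show "gc a j = lin_comb n gc ?c j + ?w j" .
  qed
  have "?w \<in> N" using V by (intro Fz_submodule_sum_mem[OF N(1)]) auto
  moreover have "?w = (\<lambda>j. gc a j - lin_comb n gc ?c j)"
    by (subst decomp) simp
  then have "?w \<in> Ig" using diff_mem_Ig[OF gc_mem_Ig rangeI] by simp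
  ultimately have w0: "?w = (\<lambda>j. 0)"
    using N(2) unfolding internal_direct_sum_def skzero_def by blast
  show ?thesis
  proof
    fix j
    show "lin_comb n gc ?c j = gc a j"
      using fun_cong[OF decomp, of j] fun_cong[OF w0, of j] by simp
  qed
qed

lemma right_invertible_if_direct_summand_Fz:
  assumes indep: "comps_independent" and "direct_summand_Fz n Ig"
  shows "comps_right_invertible"
proof -
  obtain N where N: "is_Fz_submodule n N" "internal_direct_sum n Ig N"
    using assms(2) unfolding direct_summand_Fz_def by blast
  obtain V \<Lambda> where V: "\<And>i. i < n \<Longrightarrow> V i \<in> N"
    and \<Lambda>V: "\<And>i. i < n \<Longrightarrow> unit_e i = skadd (lin_comb n gc (\<Lambda> i)) (V i)"
    by (rule decompose_unit_e[OF N(2)]) blast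
  have "(\<Sum>i<n. gc a i * \<Lambda> i a') = (if a = a' then 1 else 0)" if a: "a \<in> Tg" and a': "a' \<in> Tg" for a a'
  proof -
    have "lin_comb n gc (\<lambda>b. \<Sum>i<n. gc a i * \<Lambda> i b) = lin_comb n gc (\<lambda>b. if b = a then 1 else 0)"
      using lin_comb_eq_gc_if_complement[OF N V \<Lambda>V] lin_comb_delta a Tg_subset by auto
    from lin_comb_unique[OF indep this a'] show ?thesis by auto
  qed
  then show ?thesis unfolding comps_right_invertible_def by blast
qed

section \<open>Independence of the components\<close>

definition comp_deg :: "nat \<Rightarrow> nat" where
  "comp_deg a = skdeg n (gc a)"

text \<open>In each degree \<open>l\<close>, \<open>g\<^bsup>(a)\<^esup>\<close> has a nonzero coefficient at no more than one position, namely
  the one \<open>j\<close> with \<open>shiftpos n l j = a\<close>. Hence the leading coefficient of \<open>g\<^bsup>(a)\<^esup>\<close> lives at a single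
  position, \<open>lead_pos a\<close>, and semi-reducedness says these positions are pairwise distinct.\<close>

definition lead_pos :: "nat \<Rightarrow> nat" where
  "lead_pos a = (SOME i. i < n \<and> gc a i \<noteq> 0 \<and> degree (gc a i) = comp_deg a)"

lemma degree_gc_le: "j < n \<Longrightarrow> degree (gc a j) \<le> comp_deg a"
  unfolding comp_deg_def skdeg_def by (intro Max_ge) auto

lemma comp_deg_attained:
  assumes "a \<in> Tg"
  shows "\<exists>i<n. gc a i \<noteq> 0 \<and> degree (gc a i) = comp_deg a"
proof -
  obtain j where j: "gc a j \<noteq> 0"
    using assms unfolding supp_def skzero_def by (auto simp: fun_eq_iff)
  then have "j < n" using comp_eq_0_outside[of n j g a] by (cases "j < n") auto
  have "comp_deg a \<in> insert 0 (degree ` gc a ` {..<n})"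
    unfolding comp_deg_def skdeg_def by (intro Max_in) auto
  then show ?thesis
    using j \<open>j < n\<close> degree_gc_le[of j a] by (cases "comp_deg a = 0") auto
qed

lemma lead_pos_spec:
  assumes "a \<in> Tg"
  shows "lead_pos a < n" "gc a (lead_pos a) \<noteq> 0" "degree (gc a (lead_pos a)) = comp_deg a"
  using someI_ex[OF comp_deg_attained[OF assms]] unfolding lead_pos_def by auto

lemma coeff_comp_deg_eq_0:
  assumes "a \<in> Tg" "j \<noteq> lead_pos a"
  shows "coeff (gc a j) (comp_deg a) = 0"
proof (rule ccontr)
  assume "coeff (gc a j) (comp_deg a) \<noteq> 0"
  then have "j < n" "shiftpos n (comp_deg a) j = a"
    by (auto simp: coeff_comp split: if_splits)
  moreover have "coeff (gc a (lead_pos a)) (comp_deg a) \<noteq> 0"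
    using lead_pos_spec[OF assms(1)] by (metis leading_coeff_0_iff)
  then have "shiftpos n (comp_deg a) (lead_pos a) = a"
    by (auto simp: coeff_comp split: if_splits)
  ultimately have "j = lead_pos a"
    using shiftpos_inj lead_pos_spec(1)[OF assms(1)] by metis
  then show False using assms(2) by contradiction
qed

lemma lead_coeff_in_ideal_e: "a \<in> Tg \<Longrightarrow> in_ideal_e n (sklc n (gc a)) (lead_pos a)"
  unfolding in_ideal_e_def sklc_def using coeff_comp_deg_eq_0 unfolding comp_deg_def by auto

lemma lead_pos_inj:
  assumes "semi_reduced n g" "a \<in> Tg" "b \<in> Tg" "a \<noteq> b"
  shows "lead_pos a \<noteq> lead_pos b"
  using assms lead_coeff_in_ideal_e lead_pos_spec(1) unfolding semi_reduced_def by metis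

lemma degree_gc_at_lead_pos_less:
  assumes "semi_reduced n g" "a \<in> Tg" "b \<in> Tg" "a \<noteq> b" "gc b (lead_pos a) \<noteq> 0"
  shows "degree (gc b (lead_pos a)) < comp_deg b"
proof -
  have "coeff (gc b (lead_pos a)) (comp_deg b) = 0"
    using coeff_comp_deg_eq_0[OF assms(3)] lead_pos_inj[OF assms(1-4)] by simp
  then have "degree (gc b (lead_pos a)) \<noteq> comp_deg b" using assms(5) by (metis leading_coeff_0_iff)
  then show ?thesis using degree_gc_le lead_pos_spec(1)[OF assms(2)] by (simp add: le_neq_implies_less)
qed

text \<open>For a nontrivial relation \<open>\<Sum>\<^sub>a c\<^sub>a g\<^bsup>(a)\<^esup> = 0\<close>, pick \<open>a\<^sub>1\<close> maximising \<open>deg c\<^sub>a + comp_deg a\<close>; at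
  position \<open>lead_pos a\<^sub>1\<close> the coefficient of that degree comes from the term \<open>a\<^sub>1\<close> alone.\<close>

lemma comps_independent_if_semi_reduced:
  assumes sr: "semi_reduced n g"
  shows "comps_independent"
  unfolding comps_independent_def
proof (intro allI impI ballI)
  fix c :: "nat \<Rightarrow> 'a poly" and a0
  assume rel: "\<forall>j. (\<Sum>a\<in>Tg. c a * gc a j) = 0" and a0: "a0 \<in> Tg"
  show "c a0 = 0"
  proof (rule ccontr)
    assume "c a0 \<noteq> 0"
    define T where "T = {a \<in> Tg. c a \<noteq> 0}"
    have "finite T" "a0 \<in> T" using finite_Tg a0 \<open>c a0 \<noteq> 0\<close> unfolding T_def by auto
    define D where "D = Max ((\<lambda>a. degree (c a) + comp_deg a) ` T)"
    have D_ge: "degree (c a) + comp_deg a \<le> D" if "a \<in> T" for a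
      unfolding D_def using \<open>finite T\<close> that by (intro Max_ge) auto
    have "D \<in> (\<lambda>a. degree (c a) + comp_deg a) ` T"
      unfolding D_def using \<open>finite T\<close> \<open>a0 \<in> T\<close> by (intro Max_in) auto
    then obtain a1 where a1: "a1 \<in> T" "D = degree (c a1) + comp_deg a1" by auto
    then have "a1 \<in> Tg" "c a1 \<noteq> 0" unfolding T_def by auto
    let ?i = "lead_pos a1"
    have others: "coeff (c a * gc a ?i) D = 0" if "a \<in> Tg" "a \<noteq> a1" for a
    proof (cases "c a = 0 \<or> gc a ?i = 0")
      case False
      then have "a \<in> T" using that(1) unfolding T_def by auto
      have "degree (c a * gc a ?i) < D"
        using degree_mult_le[of "c a" "gc a ?i"] D_ge[OF \<open>a \<in> T\<close>]
          degree_gc_at_lead_pos_less[OF sr \<open>a1 \<in> Tg\<close> that(1) that(2)[symmetric]] False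
        by linarith
      then show ?thesis by (rule coeff_eq_0)
    qed auto
    have "coeff (\<Sum>a\<in>Tg. c a * gc a ?i) D = (\<Sum>a\<in>Tg. if a = a1 then coeff (c a1 * gc a1 ?i) D else 0)"
      unfolding coeff_sum by (rule sum.cong) (auto simp: others)
    also have "\<dots> = coeff (c a1 * gc a1 ?i) (degree (c a1) + degree (gc a1 ?i))"
      using \<open>a1 \<in> Tg\<close> finite_Tg a1(2) lead_pos_spec(3)[OF \<open>a1 \<in> Tg\<close>] by simp
    also have "\<dots> = lead_coeff (c a1) * lead_coeff (gc a1 ?i)"
      by (rule coeff_mult_degree_sum)
    also have "\<dots> \<noteq> 0" using \<open>c a1 \<noteq> 0\<close> lead_pos_spec(2)[OF \<open>a1 \<in> Tg\<close>] by simp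
    finally show False using rel by simp
  qed
qed

end

section \<open>The matrix \<open>\<xi>(g)\<close>\<close>

lemma coeff_xi_entry:
  assumes n: "0 < n"
  shows "coeff (xi_entry n g a b) l =
    (if a \<le> b then coeff (g b) (n * l + (b - a))
     else if l = 0 then 0 else coeff (g b) (n * (l - 1) + (n + b - a)))"
proof -
  have l_le: "l \<le> n * l" using n by simp
  show ?thesis
  proof (cases "a \<le> b")
    case True
    have "coeff (xi_entry n g a b) l = (\<Sum>k\<le>degree (g b). if k = l then coeff (g b) (n * k + (b - a)) else 0)"
      unfolding xi_entry_def using True by (simp add: coeff_sum)
    also have "\<dots> = coeff (g b) (n * l + (b - a))"
    proof (cases "l \<le> degree (g b)")
      case False
      then have "degree (g b) < n * l + (b - a)" using l_le by linarith
      then show ?thesis using False by (simp add: coeff_eq_0)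
    qed simp
    finally show ?thesis using True by simp
  next
    case False
    have "coeff (xi_entry n g a b) l = (\<Sum>k\<le>degree (g b). if Suc k = l then coeff (g b) (n * k + (n + b - a)) else 0)"
      unfolding xi_entry_def using False by (simp add: coeff_sum)
    also have "\<dots> = (if l = 0 then 0 else coeff (g b) (n * (l - 1) + (n + b - a)))"
    proof (cases l)
      case (Suc k)
      have "k \<le> n * k" using n by simp
      show ?thesis
      proof (cases "k \<le> degree (g b)")
        case False
        then have "degree (g b) < n * k + (n + b - a)" using \<open>k \<le> n * k\<close> by linarith
        then show ?thesis using False Suc by (simp add: coeff_eq_0)
      qed (use Suc in \<open>simp add: if_distrib cong: if_cong\<close>)
    qed simp
    finally show ?thesis using False by simp
  qed
qed

context skew_generator
begin

lemma coeff_monom_mult_gc: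
  assumes "a < n" "b < n"
  shows "coeff (monom 1 a * gc a b) m = (if a \<le> m \<and> m mod n = b then coeff (g b) (m - a) else 0)"
  using shiftpos_diff_eq_iff[OF assms(1), of m b] assms(2) by (auto simp: coeff_monom_mult coeff_comp)

text \<open>The identity \<open>z\<^sup>a g\<^bsup>(a)\<^esup>\<^sub>b = \<xi>\<^sub>a\<^sub>b(z\<^sup>n) z\<^sup>b\<close> is the precise sense in which \<open>\<xi>(g)\<close> repackages the
  components of \<open>g\<close>: the coefficient of \<open>z\<^bsup>nl+i\<^esup>\<close> at position \<open>b\<close> belongs to
  \<open>g\<^bsup>(a)\<^esup>\<close> with \<open>a \<equiv> b - i (mod n)\<close>.\<close>

lemma monom_mult_gc_eq_xi_entry:
  assumes a: "a < n" and b: "b < n"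
  shows "monom 1 a * gc a b = pcompose (xi_entry n g a b) (monom 1 n) * monom 1 b"
proof (rule poly_eqI)
  fix m
  note L = coeff_monom_mult_gc[OF a b, of m]
  have R: "coeff (pcompose (xi_entry n g a b) (monom 1 n) * monom 1 b) m
      = (if b \<le> m \<and> n dvd (m - b) then coeff (xi_entry n g a b) ((m - b) div n) else 0)"
    by (rule coeff_pcompose_monom_mult_monom[OF n_pos])
  show "coeff (monom 1 a * gc a b) m = coeff (pcompose (xi_entry n g a b) (monom 1 n) * monom 1 b) m"
  proof (cases "m mod n = b")
    case False
    have "\<not> (b \<le> m \<and> n dvd (m - b))"
    proof
      assume "b \<le> m \<and> n dvd (m - b)"
      then have "m mod n = b mod n" using mod_eq_dvd_iff_nat by blast
      then show False using False b by simp
    qed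
    then show ?thesis unfolding L R using False by auto
  next
    case True
    define k where "k = m div n"
    have m: "m = n * k + b" unfolding k_def using True div_mult_mod_eq[of m n] by (simp add: mult.commute)
    have "(m - b) div n = k" using m n_pos by simp
    show ?thesis
    proof (cases "a \<le> b")
      case True
      then show ?thesis unfolding L R using m \<open>(m - b) div n = k\<close> b
        by (simp add: coeff_xi_entry[OF n_pos])
    next
      case False
      show ?thesis
      proof (cases k)
        case 0
        then show ?thesis unfolding L R using m \<open>(m - b) div n = k\<close> False
          by (simp add: coeff_xi_entry[OF n_pos])
      next
        case (Suc k')
        then have "a \<le> m" "m - a = n * k' + (n + b - a)" using m a by (simp_all add: algebra_simps)
        then show ?thesis unfolding L R using m \<open>(m - b) div n = k\<close> False Suc \<open>m mod n = b\<close>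
          by (simp add: coeff_xi_entry[OF n_pos])
      qed
    qed
  qed
qed

lemma xi_entry_eq_0_iff:
  assumes "a < n" "b < n"
  shows "xi_entry n g a b = 0 \<longleftrightarrow> gc a b = 0"
proof
  assume "xi_entry n g a b = 0"
  then have "monom 1 a * gc a b = 0" using monom_mult_gc_eq_xi_entry[OF assms] by simp
  then show "gc a b = 0" by (simp add: monom_eq_0_iff)
next
  assume "gc a b = 0"
  then have "pcompose (xi_entry n g a b) (monom 1 n) = 0"
    using monom_mult_gc_eq_xi_entry[OF assms] by (simp add: monom_eq_0_iff)
  moreover have "0 < degree (monom (1::'a) n)" using n_pos by (simp add: degree_monom_eq)
  ultimately show "xi_entry n g a b = 0" using pcompose_eq_0 by blast
qed

lemma index_xi: "a < n \<Longrightarrow> b < n \<Longrightarrow> xi n g $$ (a, b) = xi_entry n g a b"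
  unfolding xi_def by simp

lemma xi_carrier: "xi n g \<in> carrier_mat n n"
  unfolding xi_def by simp

lemma mem_Tg_iff: "a \<in> Tg \<longleftrightarrow> a < n \<and> (\<exists>b<n. gc a b \<noteq> 0)"
  unfolding supp_def skzero_def fun_eq_iff using comp_eq_0_outside[of n _ g a] not_le by blast

lemma nonzero_rows_xi: "nonzero_rows (xi n g) = Tg"
proof -
  have "a \<in> nonzero_rows (xi n g) \<longleftrightarrow> a \<in> Tg" for a
    using xi_carrier unfolding nonzero_rows_def mem_Tg_iff by (auto simp: index_xi xi_entry_eq_0_iff)
  then show ?thesis by blast
qed

lemma in_M_xi: "in_M n (xi n g)"
  unfolding in_M_def using xi_carrier
  by (simp add: index_xi poly_0_coeff_0 coeff_xi_entry[OF n_pos])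

lemma poly_xi_diag_0:
  assumes "delay_free n g" "a \<in> Tg"
  shows "poly (xi n g $$ (a, a)) 0 \<noteq> 0"
proof -
  have "a < n" using assms(2) Tg_subset by auto
  have "a \<in> supp n (const_term n g)" using assms unfolding delay_free_def by simp
  then obtain j where "comp n (const_term n g) a j \<noteq> 0"
    unfolding supp_def skzero_def by (auto simp: fun_eq_iff)
  then obtain l where "coeff (comp n (const_term n g) a j) l \<noteq> 0"
    by (metis leading_coeff_0_iff)
  then have j: "j < n" "shiftpos n l j = a" "coeff (const_term n g j) l \<noteq> 0"
    by (auto simp: coeff_comp split: if_splits)
  then have "l = 0" "coeff (g j) 0 \<noteq> 0"
    unfolding const_term_def by (auto simp: coeff_pCons split: nat.splits)
  moreover have "j = a" using j(1,2) \<open>l = 0\<close> unfolding shiftpos_def by simp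
  ultimately show ?thesis
    using \<open>a < n\<close> by (simp add: index_xi poly_0_coeff_0 coeff_xi_entry[OF n_pos])
qed

lemma delay_free_mat_xi: "delay_free n g \<Longrightarrow> delay_free_mat (xi n g)"
  unfolding delay_free_mat_def nonzero_rows_xi using poly_xi_diag_0 by blast

definition comp_mat :: "'a poly mat" where
  "comp_mat = mat n n (\<lambda>(a, b). gc a b)"

lemma comp_mat_carrier: "comp_mat \<in> carrier_mat n n"
  unfolding comp_mat_def by simp

lemma index_comp_mat_rows:
  assumes "l < card Tg" "i < n"
  shows "submatrix comp_mat Tg UNIV $$ (l, i) = gc (pick Tg l) i"
  using submatrix_rows(2)[OF comp_mat_carrier Tg_subset assms] pick_in_set_le[OF assms(1)] Tg_subset assms
  unfolding comp_mat_def by auto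

lemma comps_right_invertible_iff:
  "comps_right_invertible \<longleftrightarrow>
     (\<exists>B\<in>carrier_mat n (card Tg). submatrix comp_mat Tg UNIV * B = 1\<^sub>m (card Tg))"
proof -
  let ?Q = "submatrix comp_mat Tg UNIV"
  have Q: "?Q \<in> carrier_mat (card Tg) n"
    using submatrix_rows(1)[OF comp_mat_carrier Tg_subset] .
  note Q_index = index_comp_mat_rows
  define idx where "idx a = card {x\<in>Tg. x < a}" for a
  have idx: "idx a < card Tg" "pick Tg (idx a) = a" if "a \<in> Tg" for a
    unfolding idx_def using card_less_elems_less[OF finite_Tg that] pick_card_in_set[OF that] by auto
  have pick_inj: "pick Tg l = pick Tg k \<longleftrightarrow> l = k" if "l < card Tg" "k < card Tg" for l k
    using bij_betw_pick[OF finite_Tg] that unfolding bij_betw_def inj_on_def by auto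
  have "comps_right_invertible \<longleftrightarrow>
     (\<exists>\<beta>. \<forall>l<card Tg. \<forall>k<card Tg. (\<Sum>i<n. ?Q $$ (l,i) * \<beta> i k) = (if l = k then 1 else 0))"
    unfolding comps_right_invertible_def
  proof
    assume "\<exists>\<beta>. \<forall>a\<in>Tg. \<forall>a'\<in>Tg. (\<Sum>i<n. gc a i * \<beta> i a') = (if a = a' then 1 else 0)"
    then obtain \<beta> where \<beta>: "\<forall>a\<in>Tg. \<forall>a'\<in>Tg. (\<Sum>i<n. gc a i * \<beta> i a') = (if a = a' then 1 else 0)"
      by blast
    show "\<exists>\<beta>. \<forall>l<card Tg. \<forall>k<card Tg. (\<Sum>i<n. ?Q $$ (l,i) * \<beta> i k) = (if l = k then 1 else 0)"
      using \<beta> Q_index pick_in_set_le pick_inj by (intro exI[of _ "\<lambda>i k. \<beta> i (pick Tg k)"]) auto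
  next
    assume "\<exists>\<beta>. \<forall>l<card Tg. \<forall>k<card Tg. (\<Sum>i<n. ?Q $$ (l,i) * \<beta> i k) = (if l = k then 1 else 0)"
    then obtain \<beta> where \<beta>: "\<forall>l<card Tg. \<forall>k<card Tg. (\<Sum>i<n. ?Q $$ (l,i) * \<beta> i k) = (if l = k then 1 else 0)"
      by blast
    have "(\<Sum>i<n. gc a i * \<beta> i (idx a')) = (if a = a' then 1 else 0)" if a: "a \<in> Tg" "a' \<in> Tg" for a a'
    proof -
      have "(\<Sum>i<n. gc a i * \<beta> i (idx a')) = (\<Sum>i<n. ?Q $$ (idx a, i) * \<beta> i (idx a'))"
        using Q_index idx(1,2)[OF a(1)] by (intro sum.cong) auto
      also have "\<dots> = (if idx a = idx a' then 1 else 0)" using \<beta> idx(1) a by simp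
      also have "(idx a = idx a') \<longleftrightarrow> (a = a')" using idx(2) a by metis
      finally show ?thesis .
    qed
    then show "\<exists>\<beta>. \<forall>a\<in>Tg. \<forall>a'\<in>Tg. (\<Sum>i<n. gc a i * \<beta> i a') = (if a = a' then 1 else 0)"
      by (intro exI[of _ "\<lambda>i a. \<beta> i (idx a)"] ballI)
  qed
  then show ?thesis unfolding right_inverse_iff_sum[OF Q] .
qed

lemma monom_mult_minor_eq:
  assumes J: "J \<subseteq> {..<n}" "card J = card Tg"
  shows "monom 1 (\<Sum>k<card Tg. pick Tg k) * det (submatrix comp_mat Tg J)
       = monom 1 (\<Sum>k<card Tg. pick J k) * pcompose (det (submatrix (xi n g) Tg J)) (monom 1 n)"
proof -
  interpret pc: comm_ring_hom "\<lambda>p::'a poly. pcompose p (monom 1 n)"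
    by (rule comm_ring_hom_pcompose_monom[OF n_pos])
  let ?A = "submatrix comp_mat Tg J"
  let ?X = "submatrix (xi n g) Tg J"
  let ?B = "map_mat (\<lambda>p. pcompose p (monom 1 n)) ?X"
  have A: "?A \<in> carrier_mat (card Tg) (card Tg)"
    using submatrix_index_carrier(1)[OF comp_mat_carrier Tg_subset J(1)] J(2) by simp
  have X: "?X \<in> carrier_mat (card Tg) (card Tg)"
    using submatrix_index_carrier(1)[OF xi_carrier Tg_subset J(1)] J(2) by simp
  have "monom 1 (pick Tg k) * ?A $$ (k, l) = ?B $$ (k, l) * monom 1 (pick J l)"
    if "k < card Tg" "l < card Tg" for k l
  proof -
    have "pick Tg k < n" "pick J l < n"
      using pick_in_set_le[OF that(1)] pick_in_set_le[of l J] that J Tg_subset by auto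
    then show ?thesis
      using that J(2) X monom_mult_gc_eq_xi_entry
        submatrix_index_carrier(2)[OF comp_mat_carrier Tg_subset J(1)]
        submatrix_index_carrier(2)[OF xi_carrier Tg_subset J(1)]
      by (simp add: comp_mat_def index_xi)
  qed
  from det_scaled_eq[OF A _ this] X
  have "(\<Prod>k<card Tg. monom 1 (pick Tg k)) * det ?A = (\<Prod>l<card Tg. monom 1 (pick J l)) * det ?B"
    by (simp add: atLeast0LessThan)
  then show ?thesis by (simp add: prod_monom_1)
qed

lemma basic_comp_mat_iff_basic_xi:
  assumes "delay_free n g"
  shows "basic (submatrix comp_mat Tg UNIV) \<longleftrightarrow> basic (submatrix (xi n g) Tg UNIV)"
proof -
  define Js where "Js = {J. J \<subseteq> {..<n} \<and> card J = card Tg}"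
  have dims: "dim_row (submatrix comp_mat Tg UNIV) = card Tg" "dim_col (submatrix comp_mat Tg UNIV) = n"
    "dim_row (submatrix (xi n g) Tg UNIV) = card Tg" "dim_col (submatrix (xi n g) Tg UNIV) = n"
    using submatrix_rows(1)[OF comp_mat_carrier Tg_subset] submatrix_rows(1)[OF xi_carrier Tg_subset]
    by auto
  have cols: "J \<subseteq> {..<n} \<Longrightarrow> submatrix (submatrix A Tg UNIV) UNIV J = submatrix A Tg J"
    if "A \<in> carrier_mat n n" for A :: "'a poly mat" and J
    using submatrix_submatrix_rows_cols[of J A Tg] that by simp
  have "(\<forall>d. (\<forall>J\<in>Js. d dvd det (submatrix comp_mat Tg J)) \<longrightarrow> is_unit d) \<longleftrightarrow>
        (\<forall>d. (\<forall>J\<in>Js. d dvd det (submatrix (xi n g) Tg J)) \<longrightarrow> is_unit d)"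
  proof (rule coprime_family_pcompose_iff[OF n_pos])
    show "finite Js" unfolding Js_def by (rule finite_subset[of _ "Pow {..<n}"]) auto
    show "Tg \<in> Js" unfolding Js_def using Tg_subset by simp
    show "poly (det (submatrix (xi n g) Tg Tg)) 0 \<noteq> 0"
      using poly_det_principal_submatrix_0[OF in_M_xi Tg_subset] poly_xi_diag_0[OF assms] by blast
  qed (auto simp: Js_def intro: monom_mult_minor_eq)
  then show ?thesis
    unfolding basic_def dims Js_def using cols[OF comp_mat_carrier] cols[OF xi_carrier] by auto
qed

end

theorem theorem4p1:
  fixes n :: nat and g :: "nat \<Rightarrow> 'a::{field,finite} poly"
  assumes "n \<ge> 2" and "n dvd card (UNIV :: 'a set) - 1"
    and "g \<in> skp n"
    and "delay_free n g" and "semi_reduced n g"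
  shows "(direct_summand_Fz n (left_ideal_gen n g) \<longleftrightarrow> direct_summand_ring n (left_ideal_gen n g))
       \<and> (direct_summand_ring n (left_ideal_gen n g) \<longleftrightarrow> M_basic n (xi n g))"
proof -
  \<comment> \<open>\<open>n dvd q - 1\<close> only provides the isomorphism \<open>\<phi>\<close> identifying \<open>\<bbbF>[z]\<^sup>n\<close> with \<open>A[z;\<sigma>]\<close>,
    which the encoding in \<open>Defs\<close> builds in.\<close>
  have "0 < n" using assms(1) by simp
  interpret skew_generator n g using \<open>0 < n\<close> assms(3) by unfold_locales
  have ideal: "left_ideal_gen n g = Ig"
    by (rule left_ideal_gen_eq_range_lin_comb[OF \<open>0 < n\<close>])
  have Fz: "direct_summand_Fz n Ig \<longleftrightarrow> comps_right_invertible"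
    using right_invertible_if_direct_summand_Fz[OF comps_independent_if_semi_reduced[OF assms(5)]]
      direct_summand_ring_if_right_invertible direct_summand_ring_imp_Fz[OF \<open>0 < n\<close>] by blast
  have ring: "direct_summand_ring n Ig \<longleftrightarrow> comps_right_invertible"
    using Fz direct_summand_ring_if_right_invertible direct_summand_ring_imp_Fz[OF \<open>0 < n\<close>] by blast
  have "comps_right_invertible \<longleftrightarrow> basic (submatrix (xi n g) Tg UNIV)"
    using comps_right_invertible_iff basic_iff_right_invertible[OF submatrix_rows(1)[OF comp_mat_carrier Tg_subset]]
      basic_comp_mat_iff_basic_xi[OF assms(4)] by simp
  also have "\<dots> \<longleftrightarrow> M_basic n (xi n g)"
    unfolding M_basic_def nonzero_rows_xi using in_M_xi delay_free_mat_xi[OF assms(4)] by simp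
  finally show ?thesis using ideal Fz ring by simp
qed

end
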